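(* Let $(V,L,\varphi,E)$ and $(V,C,\psi,E)$ be valuation systems. Assume that $\psi$ extends $\varphi$ and that $\psi$ is extendible. Then $\varphi$ is extendible and $\overline\psi$ extends $\overline\varphi$.
   Context: A valuation system $(V,L,\varphi,E)$ consists of: (i) a lattice $V$ which is $\sigma$-distributive (for every $a\in V$ and sequence $(b_n)$ with existing infimum, $\bigwedge_n(a\vee b_n)$ exists and equals $a\vee\bigwedge_n b_n$, and dually for suprema); (ii) a sublattice $L$ of $V$; (iii) a partially ordered abelian group $E$ which is R-complete (whenever $x_1\ge x_2\ge\cdots$ and $y_1\ge y_2\ge\cdots$ in $E$ are such that $\bigwedge_n(x_n+y_n)$ exists, $\bigwedge_n x_n$ and $\bigwedge_n y_n$ exist; dually for increasing sequences); (iv) a valuation $\varphi:L\to E$ (order-preserving, $\varphi(a\wedge b)+\varphi(a\vee b)=\varphi(a)+\varphi(b)$). A map $\psi:C\to E$ extends $\varphi:L\to E$ if $L\subseteq C$ and $\psi|_L=\varphi$. A decreasing (resp. increasing) sequence $(a_n)$ in $L$ is $\varphi$-convergent if $\bigwedge_n a_n$ exists in $V$ and $\bigwedge_n\varphi(a_n)$ exists in $E$ (resp. with suprema). $\Pi L:=\{\bigwedge_n a_n:(a_n)\ \varphi\text{-convergent decreasing}\}$ and $\varphi$ is $\Pi$-extendible if there is a valuation $\Pi\varphi:\Pi L\to E$ with $\Pi\varphi(\bigwedge_n a_n)=\bigwedge_n\varphi(a_n)$ for all such sequences; $\Sigma L,\Sigma$-extendible, $\Sigma\varphi$ dually. Hierarchy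 (transfinite recursion): $\Pi_0\varphi=\Sigma_0\varphi=\varphi$; $\varphi$ is $\Pi_{\alpha+1}$-extendible iff it is $\Sigma_\alpha$-extendible and $\Sigma_\alpha\varphi$ is $\Pi$-extendible, with $\Pi_{\alpha+1}\varphi=\Pi(\Sigma_\alpha\varphi)$; $\varphi$ is $\Sigma_{\alpha+1}$-extendible iff it is $\Pi_\alpha$-extendible and $\Pi_\alpha\varphi$ is $\Sigma$-extendible, with $\Sigma_{\alpha+1}\varphi=\Sigma(\Pi_\alpha\varphi)$; at a limit $\lambda$, $\varphi$ is $\Pi_\lambda$-extendible iff $\Pi_\alpha$-extendible for all $\alpha<\lambda$, and then $\Pi_\lambda\varphi$ is the common extension of the $\Pi_\alpha\varphi$ on $\bigcup_{\alpha<\lambda}\Pi_\alpha L$; similarly $\Sigma_\lambda$. The hierarchy has collapsed at $Q$, where $Q=\Pi_\alpha\varphi$ or $Q=\Sigma_\alpha\varphi$, if $\varphi$ is $\Pi_{\alpha+1}$- and $\Sigma_{\alpha+1}$-extendible and $\Pi(Q)=Q=\Sigma(Q)$. $\varphi$ is extendible if the hierarchy has collapsed at some $Q$; this $Q$ is then unique and denoted $\overline\varphi$. Same for $\psi$. *)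

theory Defs
  imports Main
begin

definition is_inf_of :: "'a::order set \<Rightarrow> 'a \<Rightarrow> bool" where
  "is_inf_of S x \<longleftrightarrow> (\<forall>y\<in>S. x \<le> y) \<and> (\<forall>z. (\<forall>y\<in>S. z \<le> y) \<longrightarrow> z \<le> x)"

definition is_sup_of :: "'a::order set \<Rightarrow> 'a \<Rightarrow> bool" where
  "is_sup_of S x \<longleftrightarrow> (\<forall>y\<in>S. y \<le> x) \<and> (\<forall>z. (\<forall>y\<in>S. y \<le> z) \<longrightarrow> x \<le> z)"

definition sigma_distributive :: "'v::lattice itself \<Rightarrow> bool" where
  "sigma_distributive _ \<longleftrightarrow>
     (\<forall>(a::'v) (b::nat \<Rightarrow> 'v) x. is_inf_of (range b) x \<longrightarrow>
         is_inf_of (range (\<lambda>n. sup a (b n))) (sup a x)) \<and>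
     (\<forall>(a::'v) (b::nat \<Rightarrow> 'v) x. is_sup_of (range b) x \<longrightarrow>
         is_sup_of (range (\<lambda>n. inf a (b n))) (inf a x))"

definition R_complete :: "'e::ordered_ab_group_add itself \<Rightarrow> bool" where
  "R_complete _ \<longleftrightarrow>
     (\<forall>(x::nat \<Rightarrow> 'e) y. antimono x \<and> antimono y \<and>
         (\<exists>z. is_inf_of (range (\<lambda>n. x n + y n)) z) \<longrightarrow>
         (\<exists>u. is_inf_of (range x) u) \<and> (\<exists>v. is_inf_of (range y) v)) \<and>
     (\<forall>(x::nat \<Rightarrow> 'e) y. mono x \<and> mono y \<and>
         (\<exists>z. is_sup_of (range (\<lambda>n. x n + y n)) z) \<longrightarrow>
         (\<exists>u. is_sup_of (range x) u) \<and> (\<exists>v. is_sup_of (range y) v))"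

definition sublattice :: "'v::lattice set \<Rightarrow> bool" where
  "sublattice L \<longleftrightarrow> (\<forall>a\<in>L. \<forall>b\<in>L. inf a b \<in> L \<and> sup a b \<in> L)"

definition valuation :: "'v::lattice set \<Rightarrow> ('v \<Rightarrow> 'e::ordered_ab_group_add) \<Rightarrow> bool" where
  "valuation L \<phi> \<longleftrightarrow> sublattice L \<and>
     (\<forall>a\<in>L. \<forall>b\<in>L. a \<le> b \<longrightarrow> \<phi> a \<le> \<phi> b) \<and>
     (\<forall>a\<in>L. \<forall>b\<in>L. \<phi> (inf a b) + \<phi> (sup a b) = \<phi> a + \<phi> b)"

text \<open>A valuation system (V,L,phi,E), with V the lattice type 'v and E the group type 'e.\<close>
definition valuation_system :: "'v::lattice set \<Rightarrow> ('v \<Rightarrow> 'e::ordered_ab_group_add) \<Rightarrow> bool" where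
  "valuation_system L \<phi> \<longleftrightarrow> sigma_distributive TYPE('v) \<and> R_complete TYPE('e) \<and>
     sublattice L \<and> valuation L \<phi>"

section \<open>Partial maps: a map m : 'v \<rightharpoonup> 'e stands for the function mval m on dom m\<close>

definition mval :: "('v \<rightharpoonup> 'e) \<Rightarrow> 'v \<Rightarrow> 'e" where
  "mval m a = the (m a)"

definition to_map :: "'v set \<Rightarrow> ('v \<Rightarrow> 'e) \<Rightarrow> ('v \<rightharpoonup> 'e)" where
  "to_map L \<phi> = (\<lambda>x. if x \<in> L then Some (\<phi> x) else None)"

definition is_valuation_map :: "('v::lattice \<rightharpoonup> 'e::ordered_ab_group_add) \<Rightarrow> bool" where
  "is_valuation_map m \<longleftrightarrow> valuation (dom m) (mval m)"

definition conv_dec :: "('v::lattice \<rightharpoonup> 'e::ordered_ab_group_add) \<Rightarrow> (nat \<Rightarrow> 'v) \<Rightarrow> bool" where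
  "conv_dec m a \<longleftrightarrow> (\<forall>n. a n \<in> dom m) \<and> antimono a \<and>
     (\<exists>x. is_inf_of (range a) x) \<and> (\<exists>e. is_inf_of (range (\<lambda>n. mval m (a n))) e)"

definition conv_inc :: "('v::lattice \<rightharpoonup> 'e::ordered_ab_group_add) \<Rightarrow> (nat \<Rightarrow> 'v) \<Rightarrow> bool" where
  "conv_inc m a \<longleftrightarrow> (\<forall>n. a n \<in> dom m) \<and> mono a \<and>
     (\<exists>x. is_sup_of (range a) x) \<and> (\<exists>e. is_sup_of (range (\<lambda>n. mval m (a n))) e)"

definition PiDom :: "('v::lattice \<rightharpoonup> 'e::ordered_ab_group_add) \<Rightarrow> 'v set" where
  "PiDom m = {x. \<exists>a. conv_dec m a \<and> is_inf_of (range a) x}"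

definition SigDom :: "('v::lattice \<rightharpoonup> 'e::ordered_ab_group_add) \<Rightarrow> 'v set" where
  "SigDom m = {x. \<exists>a. conv_inc m a \<and> is_sup_of (range a) x}"

definition is_Pi_ext :: "('v::lattice \<rightharpoonup> 'e::ordered_ab_group_add) \<Rightarrow> ('v \<rightharpoonup> 'e) \<Rightarrow> bool" where
  "is_Pi_ext m p \<longleftrightarrow> dom p = PiDom m \<and> is_valuation_map p \<and>
     (\<forall>a x e. conv_dec m a \<longrightarrow> is_inf_of (range a) x \<longrightarrow>
        is_inf_of (range (\<lambda>n. mval m (a n))) e \<longrightarrow> p x = Some e)"

definition is_Sig_ext :: "('v::lattice \<rightharpoonup> 'e::ordered_ab_group_add) \<Rightarrow> ('v \<rightharpoonup> 'e) \<Rightarrow> bool" where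
  "is_Sig_ext m p \<longleftrightarrow> dom p = SigDom m \<and> is_valuation_map p \<and>
     (\<forall>a x e. conv_inc m a \<longrightarrow> is_sup_of (range a) x \<longrightarrow>
        is_sup_of (range (\<lambda>n. mval m (a n))) e \<longrightarrow> p x = Some e)"

definition Pi_ext :: "('v::lattice \<rightharpoonup> 'e::ordered_ab_group_add) \<Rightarrow> ('v \<rightharpoonup> 'e) option" where
  "Pi_ext m = (if \<exists>p. is_Pi_ext m p then Some (THE p. is_Pi_ext m p) else None)"

definition Sig_ext :: "('v::lattice \<rightharpoonup> 'e::ordered_ab_group_add) \<Rightarrow> ('v \<rightharpoonup> 'e) option" where
  "Sig_ext m = (if \<exists>p. is_Sig_ext m p then Some (THE p. is_Sig_ext m p) else None)"

section \<open>The transfinite hierarchy, indexed by the field of a well-order r\<close>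

definition lt_wo :: "'o rel \<Rightarrow> 'o \<Rightarrow> 'o \<Rightarrow> bool" where
  "lt_wo r b a \<longleftrightarrow> (b, a) \<in> r \<and> b \<noteq> a"

definition is_zero_wo :: "'o rel \<Rightarrow> 'o \<Rightarrow> bool" where
  "is_zero_wo r a \<longleftrightarrow> a \<in> Field r \<and> (\<forall>b\<in>Field r. (a, b) \<in> r)"

definition is_succ_of_wo :: "'o rel \<Rightarrow> 'o \<Rightarrow> 'o \<Rightarrow> bool" where
  "is_succ_of_wo r b a \<longleftrightarrow> lt_wo r b a \<and> \<not> (\<exists>c. lt_wo r b c \<and> lt_wo r c a)"

definition common_ext :: "('v \<rightharpoonup> 'e) set \<Rightarrow> ('v \<rightharpoonup> 'e)" where
  "common_ext M = (\<lambda>x. if \<exists>q\<in>M. x \<in> dom q then (SOME q. q \<in> M \<and> x \<in> dom q) x else None)"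

text \<open>P a = Some (Pi_a phi) if phi is Pi_a-extendible, None otherwise; S likewise for Sigma_a.
  is_hierarchy m r P S says P, S follow the transfinite recursion along the well-order r.\<close>
definition is_hierarchy ::
  "('v::lattice \<rightharpoonup> 'e::ordered_ab_group_add) \<Rightarrow> 'o rel \<Rightarrow>
   ('o \<Rightarrow> ('v \<rightharpoonup> 'e) option) \<Rightarrow> ('o \<Rightarrow> ('v \<rightharpoonup> 'e) option) \<Rightarrow> bool" where
  "is_hierarchy m r P S \<longleftrightarrow>
     (\<forall>a\<in>Field r.
        (is_zero_wo r a \<longrightarrow> P a = Some m \<and> S a = Some m) \<and>
        (\<forall>b. is_succ_of_wo r b a \<longrightarrow>
            P a = Option.bind (S b) Pi_ext \<and> S a = Option.bind (P b) Sig_ext) \<and>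
        (\<not> is_zero_wo r a \<and> \<not> (\<exists>b. is_succ_of_wo r b a) \<longrightarrow>
            P a = (if \<forall>b. lt_wo r b a \<longrightarrow> P b \<noteq> None
                   then Some (common_ext {the (P b) | b. lt_wo r b a}) else None) \<and>
            S a = (if \<forall>b. lt_wo r b a \<longrightarrow> S b \<noteq> None
                   then Some (common_ext {the (S b) | b. lt_wo r b a}) else None)))"

text \<open>The hierarchy of m has collapsed at Q (ordinals represented by well-orders on 'v set).\<close>
definition collapses_at :: "('v::lattice \<rightharpoonup> 'e::ordered_ab_group_add) \<Rightarrow> ('v \<rightharpoonup> 'e) \<Rightarrow> bool" where
  "collapses_at m Q \<longleftrightarrow>
     (\<exists>(r :: 'v set rel) P S a. Well_order r \<and> is_hierarchy m r P S \<and> a \<in> Field r \<and>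
        P a \<noteq> None \<and> S a \<noteq> None \<and>
        Pi_ext (the (S a)) \<noteq> None \<and> Sig_ext (the (P a)) \<noteq> None \<and>
        (Q = the (P a) \<or> Q = the (S a)) \<and>
        Pi_ext Q = Some Q \<and> Sig_ext Q = Some Q)"

definition extendible :: "'v::lattice set \<Rightarrow> ('v \<Rightarrow> 'e::ordered_ab_group_add) \<Rightarrow> bool" where
  "extendible L \<phi> \<longleftrightarrow> (\<exists>Q. collapses_at (to_map L \<phi>) Q)"

definition closure_val :: "'v::lattice set \<Rightarrow> ('v \<Rightarrow> 'e::ordered_ab_group_add) \<Rightarrow> ('v \<rightharpoonup> 'e)" where
  "closure_val L \<phi> = (THE Q. collapses_at (to_map L \<phi>) Q)"

definition extends :: "'v set \<Rightarrow> ('v \<Rightarrow> 'e) \<Rightarrow> 'v set \<Rightarrow> ('v \<Rightarrow> 'e) \<Rightarrow> bool" where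
  "extends C \<psi> L \<phi> \<longleftrightarrow> L \<subseteq> C \<and> (\<forall>a\<in>L. \<psi> a = \<phi> a)"

end

theory Submission
  imports Defs
begin

text \<open>
  The stages of the Pi/Sigma-hierarchy of a valuation only grow: each stage is a valuation map
  containing all earlier ones, and the operators Pi and Sigma are monotone, since the
  Pi-extension of a larger valuation restricts to the Pi-extension of a smaller one (its domain
  is a sublattice by sigma-distributivity and R-completeness). Hence every stage lies below any
  map F containing the valuation with Pi F = F = Sigma F, and a collapse point is the least such F,
  so it is unique. The closure of psi is such an F for phi. Bounded by it, the hierarchy of phi is
  defined at every stage, and along a well-order of the size of the power set of V it cannot grow
  forever: that would inject the index set into V \<times> bool. So the hierarchy of phi collapses, below
  the closure of psi.
\<close>

section \<open>Infima and suprema of sequences\<close>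

lemma is_inf_of_unique: "is_inf_of S x \<Longrightarrow> is_inf_of S y \<Longrightarrow> x = y"
  unfolding is_inf_of_def by (meson order.antisym)

lemma is_sup_of_unique: "is_sup_of S x \<Longrightarrow> is_sup_of S y \<Longrightarrow> x = y"
  unfolding is_sup_of_def by (meson order.antisym)

lemma is_inf_of_least: "x \<in> S \<Longrightarrow> \<forall>y\<in>S. x \<le> y \<Longrightarrow> is_inf_of S x"
  unfolding is_inf_of_def by blast

lemma is_sup_of_greatest: "x \<in> S \<Longrightarrow> \<forall>y\<in>S. y \<le> x \<Longrightarrow> is_sup_of S x"
  unfolding is_sup_of_def by blast

lemma is_inf_of_singleton [simp]: "is_inf_of {c} c"
  unfolding is_inf_of_def by auto

lemma is_sup_of_singleton [simp]: "is_sup_of {c} c"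
  unfolding is_sup_of_def by auto

lemma is_inf_of_inf:
  fixes a b :: "nat \<Rightarrow> 'v::lattice"
  assumes "is_inf_of (range a) x" "is_inf_of (range b) y"
  shows "is_inf_of (range (\<lambda>n. inf (a n) (b n))) (inf x y)"
proof -
  have "z \<le> inf x y" if "\<forall>n. z \<le> inf (a n) (b n)" for z
    using that assms unfolding is_inf_of_def by (auto simp: le_inf_iff)
  with assms show ?thesis
    unfolding is_inf_of_def by (auto intro: le_infI1 le_infI2)
qed

lemma is_sup_of_sup:
  fixes a b :: "nat \<Rightarrow> 'v::lattice"
  assumes "is_sup_of (range a) x" "is_sup_of (range b) y"
  shows "is_sup_of (range (\<lambda>n. sup (a n) (b n))) (sup x y)"
proof -
  have "sup x y \<le> z" if "\<forall>n. sup (a n) (b n) \<le> z" for z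
    using that assms unfolding is_sup_of_def by (auto simp: le_sup_iff)
  with assms show ?thesis
    unfolding is_sup_of_def by (auto intro: le_supI1 le_supI2)
qed

text \<open>For the infimum of pointwise joins, first take the infimum in one sequence with the other
  index fixed (distributivity), then in the other; monotonicity makes the diagonal suffice.\<close>

lemma is_inf_of_sup:
  fixes a b :: "nat \<Rightarrow> 'v::lattice"
  assumes "sigma_distributive TYPE('v)" and "antimono a" "antimono b"
    and x: "is_inf_of (range a) x" and y: "is_inf_of (range b) y"
  shows "is_inf_of (range (\<lambda>n. sup (a n) (b n))) (sup x y)"
proof -
  have distrib: "is_inf_of (range (\<lambda>n. sup c (d n))) (sup c z)"
    if "is_inf_of (range d) z" for c and d :: "nat \<Rightarrow> 'v" and z
    using assms(1) that unfolding sigma_distributive_def by blast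
  have "z \<le> sup x y" if z: "\<forall>n. z \<le> sup (a n) (b n)" for z
  proof -
    have "z \<le> sup (a k) (b n)" for k n
    proof -
      have "sup (a (max k n)) (b (max k n)) \<le> sup (a k) (b n)"
        using \<open>antimono a\<close> \<open>antimono b\<close> by (intro sup_mono) (auto simp: antimono_def)
      then show ?thesis using z order.trans by blast
    qed
    then have "z \<le> sup (a k) y" for k
      using distrib[OF y, of "a k"] unfolding is_inf_of_def by blast
    then have "z \<le> sup y x"
      using distrib[OF x, of y] unfolding is_inf_of_def by (auto simp: sup_commute)
    then show ?thesis by (simp add: sup_commute)
  qed
  with x y show ?thesis
    unfolding is_inf_of_def by (auto intro: le_supI1 le_supI2)
qed

lemma is_sup_of_inf:
  fixes a b :: "nat \<Rightarrow> 'v::lattice"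
  assumes "sigma_distributive TYPE('v)" and "mono a" "mono b"
    and x: "is_sup_of (range a) x" and y: "is_sup_of (range b) y"
  shows "is_sup_of (range (\<lambda>n. inf (a n) (b n))) (inf x y)"
proof -
  have distrib: "is_sup_of (range (\<lambda>n. inf c (d n))) (inf c z)"
    if "is_sup_of (range d) z" for c and d :: "nat \<Rightarrow> 'v" and z
    using assms(1) that unfolding sigma_distributive_def by blast
  have "inf x y \<le> z" if z: "\<forall>n. inf (a n) (b n) \<le> z" for z
  proof -
    have "inf (a k) (b n) \<le> z" for k n
    proof -
      have "inf (a k) (b n) \<le> inf (a (max k n)) (b (max k n))"
        using \<open>mono a\<close> \<open>mono b\<close> by (intro inf_mono) (auto simp: mono_def)
      then show ?thesis using z order.trans by blast
    qed
    then have "inf (a k) y \<le> z" for k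
      using distrib[OF y, of "a k"] unfolding is_sup_of_def by blast
    then have "inf y x \<le> z"
      using distrib[OF x, of y] unfolding is_sup_of_def by (auto simp: inf_commute)
    then show ?thesis by (simp add: inf_commute)
  qed
  with x y show ?thesis
    unfolding is_sup_of_def by (auto intro: le_infI1 le_infI2)
qed

lemma is_inf_of_add:
  fixes u w :: "nat \<Rightarrow> 'e::ordered_ab_group_add"
  assumes "antimono u" "antimono w" and u: "is_inf_of (range u) eu" and w: "is_inf_of (range w) ew"
  shows "is_inf_of (range (\<lambda>n. u n + w n)) (eu + ew)"
proof -
  have "z \<le> eu + ew" if z: "\<forall>n. z \<le> u n + w n" for z
  proof -
    have "z - u k \<le> w n" for k n
      using z[rule_format, of "max k n"] assms(1,2)
      by (metis add_mono antimonoD diff_le_eq max.cobounded1 max.cobounded2 order.trans add.commute)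
    then have "z - ew \<le> u k" for k
      using w unfolding is_inf_of_def by (fastforce simp: algebra_simps)
    then have "z - ew \<le> eu"
      using u unfolding is_inf_of_def by blast
    then show ?thesis by (simp add: algebra_simps)
  qed
  with u w show ?thesis
    unfolding is_inf_of_def by (auto intro!: add_mono)
qed

lemma is_sup_of_iff_is_inf_of_uminus:
  fixes u :: "nat \<Rightarrow> 'e::ordered_ab_group_add"
  shows "is_sup_of (range u) e \<longleftrightarrow> is_inf_of (range (\<lambda>n. - u n)) (- e)"
  unfolding is_sup_of_def is_inf_of_def
  by (auto simp: minus_le_iff le_minus_iff) (metis neg_le_iff_le add.inverse_inverse)+

lemma is_sup_of_add:
  fixes u w :: "nat \<Rightarrow> 'e::ordered_ab_group_add"
  assumes "mono u" "mono w" "is_sup_of (range u) eu" "is_sup_of (range w) ew"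
  shows "is_sup_of (range (\<lambda>n. u n + w n)) (eu + ew)"
proof -
  have "antimono (\<lambda>n. - u n)" "antimono (\<lambda>n. - w n)"
    using assms(1,2) by (auto simp: mono_def antimono_def)
  then show ?thesis
    using is_inf_of_add[of "\<lambda>n. - u n" "\<lambda>n. - w n" "- eu" "- ew"] assms(3,4)
    by (simp add: is_sup_of_iff_is_inf_of_uminus)
qed

lemma valuation_map_inf_sup_mem:
  "is_valuation_map m \<Longrightarrow> x \<in> dom m \<Longrightarrow> y \<in> dom m \<Longrightarrow> inf x y \<in> dom m \<and> sup x y \<in> dom m"
  unfolding is_valuation_map_def valuation_def sublattice_def by blast

lemma valuation_map_mono:
  "is_valuation_map m \<Longrightarrow> x \<in> dom m \<Longrightarrow> y \<in> dom m \<Longrightarrow> x \<le> y \<Longrightarrow> mval m x \<le> mval m y"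
  unfolding is_valuation_map_def valuation_def by blast

lemma valuation_map_modular:
  "is_valuation_map m \<Longrightarrow> x \<in> dom m \<Longrightarrow> y \<in> dom m \<Longrightarrow>
    mval m (inf x y) + mval m (sup x y) = mval m x + mval m y"
  unfolding is_valuation_map_def valuation_def by blast

lemma is_valuation_mapI:
  fixes m :: "'v::lattice \<rightharpoonup> 'e::ordered_ab_group_add"
  assumes "\<And>x y. x \<in> dom m \<Longrightarrow> y \<in> dom m \<Longrightarrow>
      inf x y \<in> dom m \<and> sup x y \<in> dom m \<and> (x \<le> y \<longrightarrow> mval m x \<le> mval m y) \<and>
      mval m (inf x y) + mval m (sup x y) = mval m x + mval m y"
  shows "is_valuation_map m"
  unfolding is_valuation_map_def valuation_def sublattice_def using assms by simp

lemma valuation_map_antimono_comp: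
  "is_valuation_map m \<Longrightarrow> antimono a \<Longrightarrow> \<forall>n. a n \<in> dom m \<Longrightarrow> antimono (\<lambda>n. mval m (a n))"
  unfolding antimono_def by (blast intro: valuation_map_mono)

lemma valuation_map_mono_comp:
  "is_valuation_map m \<Longrightarrow> mono a \<Longrightarrow> \<forall>n. a n \<in> dom m \<Longrightarrow> mono (\<lambda>n. mval m (a n))"
  unfolding mono_def by (blast intro: valuation_map_mono)

lemma valuation_map_restrict:
  assumes "is_valuation_map m" "A \<subseteq> dom m" "sublattice A"
  shows "is_valuation_map (m |` A)"
proof -
  have dom: "dom (m |` A) = A"
    using assms(2) by auto
  have val: "mval (m |` A) x = mval m x" if "x \<in> A" for x
    using that by (simp add: mval_def)
  have "inf x y \<in> A" "sup x y \<in> A" if "x \<in> A" "y \<in> A" for x y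
    using assms(3) that unfolding sublattice_def by blast+
  with assms(1,2) show ?thesis
    unfolding is_valuation_map_def valuation_def sublattice_def dom
    by (simp add: val subset_eq)
qed

lemma valuation_map_to_map: "valuation L \<phi> \<Longrightarrow> is_valuation_map (to_map L \<phi>)"
proof -
  assume "valuation L \<phi>"
  moreover have "dom (to_map L \<phi>) = L" "\<And>x. x \<in> L \<Longrightarrow> mval (to_map L \<phi>) x = \<phi> x"
    unfolding to_map_def mval_def by (auto split: if_splits)
  ultimately show ?thesis
    unfolding is_valuation_map_def valuation_def sublattice_def by simp
qed

lemma to_map_le: "extends C \<psi> L \<phi> \<Longrightarrow> to_map L \<phi> \<subseteq>\<^sub>m to_map C \<psi>"
  unfolding extends_def map_le_def to_map_def by (auto split: if_splits)

lemma mval_map_le: "m \<subseteq>\<^sub>m m' \<Longrightarrow> x \<in> dom m \<Longrightarrow> mval m' x = mval m x"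
  unfolding map_le_def mval_def by simp

lemma mval_comp_map_le:
  "m \<subseteq>\<^sub>m m' \<Longrightarrow> \<forall>n. a n \<in> dom m \<Longrightarrow> (\<lambda>n. mval m' (a n)) = (\<lambda>n. mval m (a n))"
  using mval_map_le by fastforce

lemma map_le_same_dom_eq:
  assumes "f \<subseteq>\<^sub>m h" "g \<subseteq>\<^sub>m h" "dom f = dom g"
  shows "f = g"
proof
  fix x
  show "f x = g x"
  proof (cases "x \<in> dom f")
    case True
    then show ?thesis
      using assms unfolding map_le_def by simp
  next
    case False
    then show ?thesis
      using assms(3) by (metis domIff)
  qed
qed

section \<open>Pi- and Sigma-extensions\<close>

lemma conv_dec_const: "x \<in> dom m \<Longrightarrow> conv_dec m (\<lambda>n. x)"
  unfolding conv_dec_def by (auto simp: antimono_def intro: is_inf_of_singleton)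

lemma conv_inc_const: "x \<in> dom m \<Longrightarrow> conv_inc m (\<lambda>n. x)"
  unfolding conv_inc_def by (auto simp: mono_def intro: is_sup_of_singleton)

lemma conv_dec_map_le:
  assumes "m \<subseteq>\<^sub>m m'" "conv_dec m a"
  shows "conv_dec m' a"
proof -
  have dom: "\<forall>n. a n \<in> dom m"
    using assms(2) unfolding conv_dec_def by blast
  then have "\<forall>n. a n \<in> dom m'"
    using map_le_implies_dom_le[OF assms(1)] by blast
  then show ?thesis
    using assms(2) unfolding conv_dec_def mval_comp_map_le[OF assms(1) dom] by simp
qed

lemma conv_inc_map_le:
  assumes "m \<subseteq>\<^sub>m m'" "conv_inc m a"
  shows "conv_inc m' a"
proof -
  have dom: "\<forall>n. a n \<in> dom m"
    using assms(2) unfolding conv_inc_def by blast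
  then have "\<forall>n. a n \<in> dom m'"
    using map_le_implies_dom_le[OF assms(1)] by blast
  then show ?thesis
    using assms(2) unfolding conv_inc_def mval_comp_map_le[OF assms(1) dom] by simp
qed

lemma dom_subset_PiDom: "dom m \<subseteq> PiDom m"
proof
  fix x assume "x \<in> dom m"
  then have "conv_dec m (\<lambda>n. x) \<and> is_inf_of (range (\<lambda>n. x)) x"
    using conv_dec_const by simp
  then show "x \<in> PiDom m"
    unfolding PiDom_def by blast
qed

lemma dom_subset_SigDom: "dom m \<subseteq> SigDom m"
proof
  fix x assume "x \<in> dom m"
  then have "conv_inc m (\<lambda>n. x) \<and> is_sup_of (range (\<lambda>n. x)) x"
    using conv_inc_const by simp
  then show "x \<in> SigDom m"
    unfolding SigDom_def by blast
qed

lemma PiDom_mono: "m \<subseteq>\<^sub>m m' \<Longrightarrow> PiDom m \<subseteq> PiDom m'"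
  unfolding PiDom_def using conv_dec_map_le by blast

lemma SigDom_mono: "m \<subseteq>\<^sub>m m' \<Longrightarrow> SigDom m \<subseteq> SigDom m'"
  unfolding SigDom_def using conv_inc_map_le by blast

lemma is_Pi_ext_unique:
  assumes "is_Pi_ext m p" "is_Pi_ext m q"
  shows "p = q"
proof
  fix x
  show "p x = q x"
  proof (cases "x \<in> PiDom m")
    case True
    then obtain a e where "conv_dec m a" "is_inf_of (range a) x" "is_inf_of (range (\<lambda>n. mval m (a n))) e"
      unfolding PiDom_def conv_dec_def by blast
    with assms show ?thesis
      unfolding is_Pi_ext_def by simp
  next
    case False
    with assms show ?thesis
      unfolding is_Pi_ext_def by (metis domIff)
  qed
qed

lemma is_Sig_ext_unique:
  assumes "is_Sig_ext m p" "is_Sig_ext m q"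
  shows "p = q"
proof
  fix x
  show "p x = q x"
  proof (cases "x \<in> SigDom m")
    case True
    then obtain a e where "conv_inc m a" "is_sup_of (range a) x" "is_sup_of (range (\<lambda>n. mval m (a n))) e"
      unfolding SigDom_def conv_inc_def by blast
    with assms show ?thesis
      unfolding is_Sig_ext_def by simp
  next
    case False
    with assms show ?thesis
      unfolding is_Sig_ext_def by (metis domIff)
  qed
qed

lemma Pi_ext_eq_Some_iff: "Pi_ext m = Some p \<longleftrightarrow> is_Pi_ext m p"
proof -
  have "Pi_ext m = Some q" if "is_Pi_ext m q" for q
    unfolding Pi_ext_def using that is_Pi_ext_unique by (auto intro: the_equality)
  then show ?thesis
    unfolding Pi_ext_def by (metis option.inject option.distinct(1))
qed

lemma Sig_ext_eq_Some_iff: "Sig_ext m = Some p \<longleftrightarrow> is_Sig_ext m p"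
proof -
  have "Sig_ext m = Some q" if "is_Sig_ext m q" for q
    unfolding Sig_ext_def using that is_Sig_ext_unique by (auto intro: the_equality)
  then show ?thesis
    unfolding Sig_ext_def by (metis option.inject option.distinct(1))
qed

lemma is_Pi_ext_extends:
  assumes "is_Pi_ext m p"
  shows "m \<subseteq>\<^sub>m p"
  unfolding map_le_def
proof
  fix x assume "x \<in> dom m"
  then have "conv_dec m (\<lambda>n. x)" "is_inf_of (range (\<lambda>n. x)) x"
    "is_inf_of (range (\<lambda>n. mval m x)) (mval m x)"
    using conv_dec_const by simp_all
  with assms have "p x = Some (mval m x)"
    unfolding is_Pi_ext_def by blast
  with \<open>x \<in> dom m\<close> show "m x = p x"
    by (auto simp: mval_def)
qed

lemma is_Sig_ext_extends:
  assumes "is_Sig_ext m p"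
  shows "m \<subseteq>\<^sub>m p"
  unfolding map_le_def
proof
  fix x assume "x \<in> dom m"
  then have "conv_inc m (\<lambda>n. x)" "is_sup_of (range (\<lambda>n. x)) x"
    "is_sup_of (range (\<lambda>n. mval m x)) (mval m x)"
    using conv_inc_const by simp_all
  with assms have "p x = Some (mval m x)"
    unfolding is_Sig_ext_def by blast
  with \<open>x \<in> dom m\<close> show "m x = p x"
    by (auto simp: mval_def)
qed

text \<open>R-completeness is what makes the valuation converge along the pointwise meet and join:
  by modularity the two value sequences add up to the convergent sum of the original ones.\<close>

lemma conv_dec_inf_sup:
  fixes m :: "'v::lattice \<rightharpoonup> 'e::ordered_ab_group_add"
  assumes sd: "sigma_distributive TYPE('v)" and rc: "R_complete TYPE('e)"
    and m: "is_valuation_map m" and a: "conv_dec m a" and b: "conv_dec m b"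
  shows "conv_dec m (\<lambda>n. inf (a n) (b n)) \<and> conv_dec m (\<lambda>n. sup (a n) (b n))"
proof -
  let ?i = "\<lambda>n. inf (a n) (b n)" and ?s = "\<lambda>n. sup (a n) (b n)"
  obtain x y ea eb where dom: "\<forall>n. a n \<in> dom m" "\<forall>n. b n \<in> dom m"
    and anti: "antimono a" "antimono b"
    and x: "is_inf_of (range a) x" and y: "is_inf_of (range b) y"
    and ea: "is_inf_of (range (\<lambda>n. mval m (a n))) ea"
    and eb: "is_inf_of (range (\<lambda>n. mval m (b n))) eb"
    using a b unfolding conv_dec_def by blast
  have dom_is: "\<forall>n. ?i n \<in> dom m" "\<forall>n. ?s n \<in> dom m"
    using valuation_map_inf_sup_mem[OF m] dom by blast+
  have anti_is: "antimono ?i" "antimono ?s"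
    using anti unfolding antimono_def by (auto intro: le_infI1 le_infI2 le_supI1 le_supI2)
  have "is_inf_of (range (\<lambda>n. mval m (a n) + mval m (b n))) (ea + eb)"
    using is_inf_of_add[OF _ _ ea eb] valuation_map_antimono_comp[OF m] anti dom by blast
  moreover have "mval m (a n) + mval m (b n) = mval m (?i n) + mval m (?s n)" for n
    using valuation_map_modular[OF m] dom by simp
  ultimately have "\<exists>z. is_inf_of (range (\<lambda>n. mval m (?i n) + mval m (?s n))) z"
    by auto
  then have "(\<exists>u. is_inf_of (range (\<lambda>n. mval m (?i n))) u) \<and> (\<exists>v. is_inf_of (range (\<lambda>n. mval m (?s n))) v)"
    using rc valuation_map_antimono_comp[OF m] anti_is dom_is unfolding R_complete_def by blast
  with dom_is anti_is is_inf_of_inf[OF x y] is_inf_of_sup[OF sd anti x y] show ?thesis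
    unfolding conv_dec_def by blast
qed

lemma conv_inc_inf_sup:
  fixes m :: "'v::lattice \<rightharpoonup> 'e::ordered_ab_group_add"
  assumes sd: "sigma_distributive TYPE('v)" and rc: "R_complete TYPE('e)"
    and m: "is_valuation_map m" and a: "conv_inc m a" and b: "conv_inc m b"
  shows "conv_inc m (\<lambda>n. inf (a n) (b n)) \<and> conv_inc m (\<lambda>n. sup (a n) (b n))"
proof -
  let ?i = "\<lambda>n. inf (a n) (b n)" and ?s = "\<lambda>n. sup (a n) (b n)"
  obtain x y ea eb where dom: "\<forall>n. a n \<in> dom m" "\<forall>n. b n \<in> dom m"
    and mon: "mono a" "mono b"
    and x: "is_sup_of (range a) x" and y: "is_sup_of (range b) y"
    and ea: "is_sup_of (range (\<lambda>n. mval m (a n))) ea"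
    and eb: "is_sup_of (range (\<lambda>n. mval m (b n))) eb"
    using a b unfolding conv_inc_def by blast
  have dom_is: "\<forall>n. ?i n \<in> dom m" "\<forall>n. ?s n \<in> dom m"
    using valuation_map_inf_sup_mem[OF m] dom by blast+
  have mon_is: "mono ?i" "mono ?s"
    using mon unfolding mono_def by (auto intro: le_infI1 le_infI2 le_supI1 le_supI2)
  have "is_sup_of (range (\<lambda>n. mval m (a n) + mval m (b n))) (ea + eb)"
    using is_sup_of_add[OF _ _ ea eb] valuation_map_mono_comp[OF m] mon dom by blast
  moreover have "mval m (a n) + mval m (b n) = mval m (?i n) + mval m (?s n)" for n
    using valuation_map_modular[OF m] dom by simp
  ultimately have "\<exists>z. is_sup_of (range (\<lambda>n. mval m (?i n) + mval m (?s n))) z"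
    by auto
  then have "(\<exists>u. is_sup_of (range (\<lambda>n. mval m (?i n))) u) \<and> (\<exists>v. is_sup_of (range (\<lambda>n. mval m (?s n))) v)"
    using rc valuation_map_mono_comp[OF m] mon_is dom_is unfolding R_complete_def by blast
  with dom_is mon_is is_sup_of_sup[OF x y] is_sup_of_inf[OF sd mon x y] show ?thesis
    unfolding conv_inc_def by blast
qed

lemma PiDom_sublattice:
  fixes m :: "'v::lattice \<rightharpoonup> 'e::ordered_ab_group_add"
  assumes "sigma_distributive TYPE('v)" "R_complete TYPE('e)" "is_valuation_map m"
  shows "sublattice (PiDom m)"
  unfolding sublattice_def
proof (intro ballI conjI)
  fix x y assume "x \<in> PiDom m" "y \<in> PiDom m"
  then obtain a b where a: "conv_dec m a" "is_inf_of (range a) x" and b: "conv_dec m b" "is_inf_of (range b) y"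
    unfolding PiDom_def by blast
  have "antimono a" "antimono b"
    using a(1) b(1) unfolding conv_dec_def by blast+
  then show "inf x y \<in> PiDom m" "sup x y \<in> PiDom m"
    using conv_dec_inf_sup[OF assms a(1) b(1)] is_inf_of_inf[OF a(2) b(2)]
      is_inf_of_sup[OF assms(1) _ _ a(2) b(2)]
    unfolding PiDom_def by blast+
qed

lemma SigDom_sublattice:
  fixes m :: "'v::lattice \<rightharpoonup> 'e::ordered_ab_group_add"
  assumes "sigma_distributive TYPE('v)" "R_complete TYPE('e)" "is_valuation_map m"
  shows "sublattice (SigDom m)"
  unfolding sublattice_def
proof (intro ballI conjI)
  fix x y assume "x \<in> SigDom m" "y \<in> SigDom m"
  then obtain a b where a: "conv_inc m a" "is_sup_of (range a) x" and b: "conv_inc m b" "is_sup_of (range b) y"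
    unfolding SigDom_def by blast
  have "mono a" "mono b"
    using a(1) b(1) unfolding conv_inc_def by blast+
  then show "inf x y \<in> SigDom m" "sup x y \<in> SigDom m"
    using conv_inc_inf_sup[OF assms a(1) b(1)] is_sup_of_sup[OF a(2) b(2)]
      is_sup_of_inf[OF assms(1) _ _ a(2) b(2)]
    unfolding SigDom_def by blast+
qed

lemma Pi_ext_mono:
  fixes m :: "'v::lattice \<rightharpoonup> 'e::ordered_ab_group_add"
  assumes "sigma_distributive TYPE('v)" "R_complete TYPE('e)" "is_valuation_map m"
    and le: "m \<subseteq>\<^sub>m m'" and ext: "Pi_ext m' = Some p'"
  obtains p where "Pi_ext m = Some p" "p \<subseteq>\<^sub>m p'"
proof -
  have p': "is_Pi_ext m' p'"
    using ext Pi_ext_eq_Some_iff by blast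
  have sub: "PiDom m \<subseteq> dom p'"
    using PiDom_mono[OF le] p' unfolding is_Pi_ext_def by blast
  have "is_Pi_ext m (p' |` PiDom m)"
    unfolding is_Pi_ext_def
  proof (intro conjI allI impI)
    show "dom (p' |` PiDom m) = PiDom m"
      using sub by auto
    show "is_valuation_map (p' |` PiDom m)"
      using valuation_map_restrict[OF _ sub PiDom_sublattice[OF assms(1-3)]] p'
      unfolding is_Pi_ext_def by blast
  next
    fix a x e
    assume a: "conv_dec m a" "is_inf_of (range a) x" "is_inf_of (range (\<lambda>n. mval m (a n))) e"
    have "\<forall>n. a n \<in> dom m"
      using a(1) unfolding conv_dec_def by blast
    then have "is_inf_of (range (\<lambda>n. mval m' (a n))) e"
      using a(3) by (subst mval_comp_map_le[OF le])
    then have "p' x = Some e"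
      using p' conv_dec_map_le[OF le a(1)] a(2) unfolding is_Pi_ext_def by blast
    moreover have "x \<in> PiDom m"
      using a unfolding PiDom_def by blast
    ultimately show "(p' |` PiDom m) x = Some e"
      by simp
  qed
  moreover have "p' |` PiDom m \<subseteq>\<^sub>m p'"
    by (auto simp: map_le_def)
  ultimately show thesis
    using that Pi_ext_eq_Some_iff by blast
qed

lemma Sig_ext_mono:
  fixes m :: "'v::lattice \<rightharpoonup> 'e::ordered_ab_group_add"
  assumes "sigma_distributive TYPE('v)" "R_complete TYPE('e)" "is_valuation_map m"
    and le: "m \<subseteq>\<^sub>m m'" and ext: "Sig_ext m' = Some p'"
  obtains p where "Sig_ext m = Some p" "p \<subseteq>\<^sub>m p'"
proof -
  have p': "is_Sig_ext m' p'"
    using ext Sig_ext_eq_Some_iff by blast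
  have sub: "SigDom m \<subseteq> dom p'"
    using SigDom_mono[OF le] p' unfolding is_Sig_ext_def by blast
  have "is_Sig_ext m (p' |` SigDom m)"
    unfolding is_Sig_ext_def
  proof (intro conjI allI impI)
    show "dom (p' |` SigDom m) = SigDom m"
      using sub by auto
    show "is_valuation_map (p' |` SigDom m)"
      using valuation_map_restrict[OF _ sub SigDom_sublattice[OF assms(1-3)]] p'
      unfolding is_Sig_ext_def by blast
  next
    fix a x e
    assume a: "conv_inc m a" "is_sup_of (range a) x" "is_sup_of (range (\<lambda>n. mval m (a n))) e"
    have "\<forall>n. a n \<in> dom m"
      using a(1) unfolding conv_inc_def by blast
    then have "is_sup_of (range (\<lambda>n. mval m' (a n))) e"
      using a(3) by (subst mval_comp_map_le[OF le])
    then have "p' x = Some e"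
      using p' conv_inc_map_le[OF le a(1)] a(2) unfolding is_Sig_ext_def by blast
    moreover have "x \<in> SigDom m"
      using a unfolding SigDom_def by blast
    ultimately show "(p' |` SigDom m) x = Some e"
      by simp
  qed
  moreover have "p' |` SigDom m \<subseteq>\<^sub>m p'"
    by (auto simp: map_le_def)
  ultimately show thesis
    using that Sig_ext_eq_Some_iff by blast
qed

lemma finite_antimono_attains_min:
  fixes a :: "nat \<Rightarrow> 'v::order"
  assumes "finite (UNIV :: 'v set)" "antimono a"
  obtains N where "\<forall>n. a N \<le> a n"
proof -
  have "finite (range a)"
    using finite_subset[OF subset_UNIV assms(1)] .
  then obtain N where N: "\<forall>b\<in>range a. b \<le> a N \<longrightarrow> a N = b"
    using finite_has_minimal[of "range a"] by blast
  have "a N \<le> a n" for n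
    using N assms(2) unfolding antimono_def by (metis max.cobounded1 max.cobounded2 rangeI)
  with that show thesis by blast
qed

lemma finite_mono_attains_max:
  fixes a :: "nat \<Rightarrow> 'v::order"
  assumes "finite (UNIV :: 'v set)" "mono a"
  obtains N where "\<forall>n. a n \<le> a N"
proof -
  have "finite (range a)"
    using finite_subset[OF subset_UNIV assms(1)] .
  then obtain N where N: "\<forall>b\<in>range a. a N \<le> b \<longrightarrow> a N = b"
    using finite_has_maximal[of "range a"] by blast
  have "a n \<le> a N" for n
    using N assms(2) unfolding mono_def by (metis max.cobounded1 max.cobounded2 rangeI)
  with that show thesis by blast
qed

text \<open>In a finite lattice monotone sequences attain their limits, so Pi and Sigma add nothing.\<close>

lemma Pi_ext_finite:
  fixes m :: "'v::lattice \<rightharpoonup> 'e::ordered_ab_group_add"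
  assumes fin: "finite (UNIV :: 'v set)" and m: "is_valuation_map m"
  shows "Pi_ext m = Some m"
proof -
  have limit: "x \<in> dom m \<and> m x = Some e"
    if a: "conv_dec m a" "is_inf_of (range a) x" "is_inf_of (range (\<lambda>n. mval m (a n))) e" for a x e
  proof -
    have dom: "\<forall>n. a n \<in> dom m" and "antimono a"
      using a(1) unfolding conv_dec_def by blast+
    then obtain N where N: "\<forall>n. a N \<le> a n"
      using finite_antimono_attains_min[OF fin] by blast
    then have "is_inf_of (range a) (a N)"
      by (intro is_inf_of_least) auto
    then have "x = a N"
      using is_inf_of_unique[OF a(2)] by blast
    have "is_inf_of (range (\<lambda>n. mval m (a n))) (mval m (a N))"
      using N dom valuation_map_mono[OF m] by (intro is_inf_of_least) auto
    then have "e = mval m (a N)"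
      using is_inf_of_unique[OF a(3)] by blast
    with \<open>x = a N\<close> dom show ?thesis
      by (auto simp: mval_def domIff)
  qed
  have "PiDom m \<subseteq> dom m"
    using limit unfolding PiDom_def conv_dec_def by blast
  with dom_subset_PiDom limit m have "is_Pi_ext m m"
    unfolding is_Pi_ext_def by blast
  then show ?thesis
    by (simp add: Pi_ext_eq_Some_iff)
qed

lemma Sig_ext_finite:
  fixes m :: "'v::lattice \<rightharpoonup> 'e::ordered_ab_group_add"
  assumes fin: "finite (UNIV :: 'v set)" and m: "is_valuation_map m"
  shows "Sig_ext m = Some m"
proof -
  have limit: "x \<in> dom m \<and> m x = Some e"
    if a: "conv_inc m a" "is_sup_of (range a) x" "is_sup_of (range (\<lambda>n. mval m (a n))) e" for a x e
  proof -
    have dom: "\<forall>n. a n \<in> dom m" and "mono a"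
      using a(1) unfolding conv_inc_def by blast+
    then obtain N where N: "\<forall>n. a n \<le> a N"
      using finite_mono_attains_max[OF fin] by blast
    then have "is_sup_of (range a) (a N)"
      by (intro is_sup_of_greatest) auto
    then have "x = a N"
      using is_sup_of_unique[OF a(2)] by blast
    have "is_sup_of (range (\<lambda>n. mval m (a n))) (mval m (a N))"
      using N dom valuation_map_mono[OF m] by (intro is_sup_of_greatest) auto
    then have "e = mval m (a N)"
      using is_sup_of_unique[OF a(3)] by blast
    with \<open>x = a N\<close> dom show ?thesis
      by (auto simp: mval_def domIff)
  qed
  have "SigDom m \<subseteq> dom m"
    using limit unfolding SigDom_def conv_inc_def by blast
  with dom_subset_SigDom limit m have "is_Sig_ext m m"
    unfolding is_Sig_ext_def by blast
  then show ?thesis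
    by (simp add: Sig_ext_eq_Some_iff)
qed

section \<open>Common extensions of chains of maps\<close>

lemma common_ext_witness:
  assumes "q \<in> M" "x \<in> dom q"
  obtains q' where "q' \<in> M" "x \<in> dom q'" "common_ext M x = q' x"
proof -
  let ?q' = "SOME q. q \<in> M \<and> x \<in> dom q"
  have "?q' \<in> M \<and> x \<in> dom ?q'"
    using someI[of "\<lambda>q. q \<in> M \<and> x \<in> dom q"] assms by blast
  moreover have "common_ext M x = ?q' x"
    unfolding common_ext_def using assms by auto
  ultimately show thesis
    using that by blast
qed

lemma dom_common_ext: "dom (common_ext M) = (\<Union>q\<in>M. dom q)"
proof (intro set_eqI iffI)
  fix x assume x: "x \<in> dom (common_ext M)"
  show "x \<in> (\<Union>q\<in>M. dom q)"
  proof (rule ccontr)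
    assume "x \<notin> (\<Union>q\<in>M. dom q)"
    then have "common_ext M x = None"
      unfolding common_ext_def by simp
    with x show False
      by (simp add: domIff)
  qed
next
  fix x assume "x \<in> (\<Union>q\<in>M. dom q)"
  then obtain q where "q \<in> M" "x \<in> dom q"
    by blast
  then obtain q' where "x \<in> dom q'" "common_ext M x = q' x"
    by (rule common_ext_witness)
  then show "x \<in> dom (common_ext M)"
    by (simp add: domIff)
qed
lemma common_ext_least:
  assumes "\<forall>q\<in>M. q \<subseteq>\<^sub>m F"
  shows "common_ext M \<subseteq>\<^sub>m F"
  unfolding map_le_def
proof
  fix x assume "x \<in> dom (common_ext M)"
  then obtain q where "q \<in> M" "x \<in> dom q"
    unfolding dom_common_ext by blast
  then obtain q' where "q' \<in> M" "x \<in> dom q'" "common_ext M x = q' x"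
    by (rule common_ext_witness)
  moreover have "q' x = F x"
    using assms \<open>q' \<in> M\<close> \<open>x \<in> dom q'\<close> unfolding map_le_def by blast
  ultimately show "common_ext M x = F x"
    by simp
qed

lemma common_ext_upper:
  assumes "Complete_Partial_Order.chain (\<subseteq>\<^sub>m) M" "q \<in> M"
  shows "q \<subseteq>\<^sub>m common_ext M"
  unfolding map_le_def
proof
  fix x assume x: "x \<in> dom q"
  obtain q' where "q' \<in> M" "x \<in> dom q'" "common_ext M x = q' x"
    using common_ext_witness[OF assms(2) x] .
  moreover have "q \<subseteq>\<^sub>m q' \<or> q' \<subseteq>\<^sub>m q"
    using chainD[OF assms(1) assms(2) \<open>q' \<in> M\<close>] .
  ultimately show "q x = common_ext M x"
    using x unfolding map_le_def by metis
qed

lemma valuation_map_common_ext: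
  fixes M :: "('v::lattice \<rightharpoonup> 'e::ordered_ab_group_add) set"
  assumes chain: "Complete_Partial_Order.chain (\<subseteq>\<^sub>m) M" and val: "\<forall>q\<in>M. is_valuation_map q"
  shows "is_valuation_map (common_ext M)"
proof -
  let ?c = "common_ext M"
  have shared: "\<exists>q\<in>M. x \<in> dom q \<and> y \<in> dom q" if xy: "x \<in> dom ?c" "y \<in> dom ?c" for x y
  proof -
    obtain q1 q2 where q: "q1 \<in> M" "x \<in> dom q1" "q2 \<in> M" "y \<in> dom q2"
      using xy unfolding dom_common_ext by blast
    then have "q1 \<subseteq>\<^sub>m q2 \<or> q2 \<subseteq>\<^sub>m q1"
      using chainD[OF chain] by blast
    with q show ?thesis
      using map_le_implies_dom_le by blast
  qed
  show ?thesis
  proof (rule is_valuation_mapI)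
    fix x y assume xy: "x \<in> dom ?c" "y \<in> dom ?c"
    then obtain q where "q \<in> M" "x \<in> dom q" "y \<in> dom q"
      using shared by blast
    then have q: "is_valuation_map q" "q \<subseteq>\<^sub>m ?c" "x \<in> dom q" "y \<in> dom q"
      using val common_ext_upper[OF chain] by blast+
    have lattice: "inf x y \<in> dom q" "sup x y \<in> dom q"
      using valuation_map_inf_sup_mem[OF q(1,3,4)] by blast+
    have "mval ?c x = mval q x" "mval ?c y = mval q y"
      "mval ?c (inf x y) = mval q (inf x y)" "mval ?c (sup x y) = mval q (sup x y)"
      using mval_map_le[OF q(2)] q(3,4) lattice by blast+
    then show "inf x y \<in> dom ?c \<and> sup x y \<in> dom ?c \<and> (x \<le> y \<longrightarrow> mval ?c x \<le> mval ?c y) \<and>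
      mval ?c (inf x y) + mval ?c (sup x y) = mval ?c x + mval ?c y"
      using lattice map_le_implies_dom_le[OF q(2)] valuation_map_mono[OF q(1,3,4)]
        valuation_map_modular[OF q(1,3,4)] by auto
  qed
qed

lemma lt_wo_Field: "lt_wo r b a \<Longrightarrow> b \<in> Field r \<and> a \<in> Field r"
  unfolding lt_wo_def by (auto intro: FieldI1 FieldI2)

lemma lt_wo_eq_Diff_Id: "{(b, a). lt_wo r b a} = r - Id"
  unfolding lt_wo_def by auto

lemma lt_wo_trans: "Well_order r \<Longrightarrow> lt_wo r a b \<Longrightarrow> lt_wo r b c \<Longrightarrow> lt_wo r a c"
  using wo_rel.TRANS[of r] wo_rel.ANTISYM[of r] unfolding wo_rel_def lt_wo_def trans_def antisym_def
  by blast

lemma lt_wo_asym: "Well_order r \<Longrightarrow> lt_wo r a b \<Longrightarrow> \<not> lt_wo r b a"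
  using wo_rel.ANTISYM[of r] unfolding wo_rel_def lt_wo_def antisym_def by blast

lemma lt_wo_trichotomy:
  "Well_order r \<Longrightarrow> a \<in> Field r \<Longrightarrow> b \<in> Field r \<Longrightarrow> a = b \<or> lt_wo r a b \<or> lt_wo r b a"
  using wo_rel.TOTALS[of r] unfolding wo_rel_def lt_wo_def by blast

lemma lt_wo_induct [consumes 1, case_names less]:
  assumes "Well_order r" and "\<And>a. (\<And>b. lt_wo r b a \<Longrightarrow> Q b) \<Longrightarrow> Q a"
  shows "Q a"
  using wf_induct[OF wo_rel.WF[of r, unfolded wo_rel_def, OF assms(1)], of Q a] assms(2)
  unfolding lt_wo_def by blast

lemma not_lt_wo_zero: "Well_order r \<Longrightarrow> is_zero_wo r a \<Longrightarrow> \<not> lt_wo r b a"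
  using wo_rel.ANTISYM[of r] unfolding wo_rel_def is_zero_wo_def lt_wo_def antisym_def
  by (blast intro: FieldI1)

lemma is_zero_wo_exists:
  assumes "Well_order r" "a \<in> Field r"
  obtains z where "is_zero_wo r z"
  using wo_rel.minim_least[of r "Field r"] wo_rel.minim_inField[of r "Field r"] assms
  unfolding wo_rel_def is_zero_wo_def by blast

lemma lt_wo_nonzero_exists:
  assumes "Well_order r" "a \<in> Field r" "\<not> is_zero_wo r a"
  obtains b where "lt_wo r b a"
proof -
  obtain z where z: "is_zero_wo r z"
    using is_zero_wo_exists[OF assms(1,2)] .
  then have "(z, a) \<in> r" "z \<noteq> a"
    using assms(2,3) unfolding is_zero_wo_def by auto
  then show thesis
    using that unfolding lt_wo_def by blast
qed

lemma is_succ_of_wo_lt: "is_succ_of_wo r b a \<Longrightarrow> lt_wo r b a"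
  unfolding is_succ_of_wo_def by blast

lemma lt_succ_wo_cases:
  "Well_order r \<Longrightarrow> is_succ_of_wo r b a \<Longrightarrow> lt_wo r c a \<Longrightarrow> c = b \<or> lt_wo r c b"
  using lt_wo_trichotomy[of r c b] lt_wo_Field[of r c a] lt_wo_Field[of r b a]
  unfolding is_succ_of_wo_def by blast

lemma succ_wo_le:
  "Well_order r \<Longrightarrow> is_succ_of_wo r c s \<Longrightarrow> lt_wo r c d \<Longrightarrow> s = d \<or> lt_wo r s d"
  using lt_wo_trichotomy[of r s d] lt_wo_Field[of r c s] lt_wo_Field[of r c d]
  unfolding is_succ_of_wo_def by blast

lemma is_succ_of_wo_unique:
  "Well_order r \<Longrightarrow> is_succ_of_wo r b a \<Longrightarrow> is_succ_of_wo r b' a \<Longrightarrow> b = b'"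
  using lt_succ_wo_cases[of r b a b'] lt_succ_wo_cases[of r b' a b] lt_wo_asym[of r b b']
  unfolding is_succ_of_wo_def by blast

lemma is_succ_of_wo_exists:
  assumes "Well_order r" "lt_wo r c x"
  obtains s where "is_succ_of_wo r c s"
proof -
  obtain s where s: "s \<in> {x. lt_wo r c x}" and least: "\<And>y. (y, s) \<in> r - Id \<Longrightarrow> y \<notin> {x. lt_wo r c x}"
    using wfE_min[OF wo_rel.WF[of r, unfolded wo_rel_def, OF assms(1)], of x "{x. lt_wo r c x}"] assms(2)
    by blast
  then have "is_succ_of_wo r c s"
    unfolding is_succ_of_wo_def lt_wo_def by blast
  then show thesis
    using that by blast
qed

lemma no_inj_Pow_times_bool:
  assumes "infinite (UNIV :: 'a set)"
  shows "\<not> inj (f :: 'a set \<Rightarrow> 'a \<times> bool)"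
proof
  assume "inj f"
  then have "(card_of (UNIV :: 'a set set), card_of (UNIV :: ('a \<times> bool) set)) \<in> ordLeq"
    using card_of_ordLeq by blast
  moreover have "(card_of (UNIV :: bool set), card_of (UNIV :: 'a set)) \<in> ordLeq"
    by (meson assms finite_UNIV finite_iff_ordLess_natLeq infinite_iff_natLeq_ordLeq
        ordLeq_iff_ordLess_or_ordIso ordLess_ordLeq_trans)
  then have "(card_of (UNIV :: ('a \<times> bool) set), card_of (UNIV :: 'a set)) \<in> ordIso"
    using card_of_Times_infinite[OF assms, of "UNIV :: bool set"] by simp
  moreover have "(card_of (UNIV :: 'a set), card_of (UNIV :: 'a set set)) \<in> ordLess"
    using card_of_Pow[of "UNIV :: 'a set"] by simp
  ultimately show False
    using ordLeq_ordIso_trans not_ordLess_ordLeq by blast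
qed

lemma Card_order_no_greatest:
  assumes "Card_order r" "infinite (Field r)" "c \<in> Field r"
  obtains x where "lt_wo r c x"
  using infinite_Card_order_limit[OF assms] that unfolding lt_wo_def by blast

lemma card_of_Pow_UNIV_successor:
  assumes "infinite (UNIV :: 'a set)"
  obtains d where "is_succ_of_wo (card_of (UNIV :: 'a set set)) c d"
proof -
  have "infinite (Field (card_of (UNIV :: 'a set set)))"
    using assms by (metis Field_card_of Pow_UNIV finite_Pow_iff)
  then obtain x where "lt_wo (card_of (UNIV :: 'a set set)) c x"
    using Card_order_no_greatest[OF card_of_Card_order] by (metis Field_card_of UNIV_I)
  then show thesis
    by (rule is_succ_of_wo_exists[OF card_of_Well_order _ that])
qed

section \<open>The hierarchy\<close>

definition hierarchy_step ::
  "('v::lattice \<rightharpoonup> 'e::ordered_ab_group_add) \<Rightarrow> 'o rel \<Rightarrow>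
   ('o \<Rightarrow> ('v \<rightharpoonup> 'e) option \<times> ('v \<rightharpoonup> 'e) option) \<Rightarrow> 'o \<Rightarrow> ('v \<rightharpoonup> 'e) option \<times> ('v \<rightharpoonup> 'e) option"
where
  "hierarchy_step m r g a =
     (if is_zero_wo r a then (Some m, Some m)
      else if \<exists>b. is_succ_of_wo r b a then
        (let b = SOME b. is_succ_of_wo r b a in
         (Option.bind (snd (g b)) Pi_ext, Option.bind (fst (g b)) Sig_ext))
      else
        ((if \<forall>b. lt_wo r b a \<longrightarrow> fst (g b) \<noteq> None
          then Some (common_ext {the (fst (g b)) | b. lt_wo r b a}) else None),
         (if \<forall>b. lt_wo r b a \<longrightarrow> snd (g b) \<noteq> None
          then Some (common_ext {the (snd (g b)) | b. lt_wo r b a}) else None)))"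

lemma hierarchy_step_cong:
  assumes "\<And>b. lt_wo r b a \<Longrightarrow> g b = g' b"
  shows "hierarchy_step m r g a = hierarchy_step m r g' a"
proof -
  have all: "(\<forall>b. lt_wo r b a \<longrightarrow> Q (g b)) = (\<forall>b. lt_wo r b a \<longrightarrow> Q (g' b))" for Q :: "_ \<Rightarrow> bool"
    using assms by auto
  have image: "{f (g b) | b. lt_wo r b a} = {f (g' b) | b. lt_wo r b a}" for f :: "_ \<Rightarrow> 'v \<rightharpoonup> 'e"
    using assms by force
  have "g (SOME b. is_succ_of_wo r b a) = g' (SOME b. is_succ_of_wo r b a)"
    if "\<exists>b. is_succ_of_wo r b a"
    by (rule assms[OF is_succ_of_wo_lt[OF someI_ex[OF that]]])
  then show ?thesis
    unfolding hierarchy_step_def Let_def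
    by (simp only: all[of "\<lambda>x. fst x \<noteq> None"] all[of "\<lambda>x. snd x \<noteq> None"]
      image[of "\<lambda>x. the (fst x)"] image[of "\<lambda>x. the (snd x)"] cong: if_cong)
qed

lemma hierarchy_exists:
  assumes "Well_order r"
  obtains P S where "is_hierarchy m r P S"
proof -
  let ?R = "{(b, a). lt_wo r b a}"
  define h where "h = wfrec ?R (hierarchy_step m r)"
  have "wf ?R"
    using wo_rel.WF[of r] assms unfolding lt_wo_eq_Diff_Id wo_rel_def by blast
  then have h: "h a = hierarchy_step m r h a" for a
    unfolding h_def by (subst wfrec) (auto simp: cut_apply intro: hierarchy_step_cong)
  have "is_hierarchy m r (\<lambda>a. fst (h a)) (\<lambda>a. snd (h a))"
    unfolding is_hierarchy_def
  proof (intro ballI conjI impI allI)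
    fix a
    show "fst (h a) = Some m" "snd (h a) = Some m" if "is_zero_wo r a"
      using h[of a] that unfolding hierarchy_step_def by simp_all
    show "fst (h a) = Option.bind (snd (h b)) Pi_ext" "snd (h a) = Option.bind (fst (h b)) Sig_ext"
      if succ: "is_succ_of_wo r b a" for b
    proof -
      have "\<not> is_zero_wo r a"
        using not_lt_wo_zero[OF assms] is_succ_of_wo_lt[OF succ] by blast
      moreover have "(SOME b. is_succ_of_wo r b a) = b"
        using is_succ_of_wo_unique[OF assms someI[of "\<lambda>b. is_succ_of_wo r b a", OF succ] succ] .
      ultimately show "fst (h a) = Option.bind (snd (h b)) Pi_ext" "snd (h a) = Option.bind (fst (h b)) Sig_ext"
        using h[of a] succ unfolding hierarchy_step_def Let_def by auto
    qed
    show "fst (h a) = (if \<forall>b. lt_wo r b a \<longrightarrow> fst (h b) \<noteq> None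
                   then Some (common_ext {the (fst (h b)) | b. lt_wo r b a}) else None)"
      "snd (h a) = (if \<forall>b. lt_wo r b a \<longrightarrow> snd (h b) \<noteq> None
                   then Some (common_ext {the (snd (h b)) | b. lt_wo r b a}) else None)"
      if "\<not> is_zero_wo r a \<and> \<not> (\<exists>b. is_succ_of_wo r b a)"
      using h[of a] that unfolding hierarchy_step_def by simp_all
  qed
  then show thesis
    using that by blast
qed

locale valuation_hierarchy =
  fixes m :: "'v::lattice \<rightharpoonup> 'e::ordered_ab_group_add" and r :: "'o rel"
    and P S :: "'o \<Rightarrow> ('v \<rightharpoonup> 'e) option"
  assumes sigma_distributive: "sigma_distributive TYPE('v)"
    and R_complete: "R_complete TYPE('e)"
    and valuation_map: "is_valuation_map m"
    and well_order: "Well_order r"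
    and hierarchy: "is_hierarchy m r P S"
begin

lemma stage_equations:
  assumes "a \<in> Field r"
  shows "(is_zero_wo r a \<longrightarrow> P a = Some m \<and> S a = Some m) \<and>
        (\<forall>b. is_succ_of_wo r b a \<longrightarrow>
            P a = Option.bind (S b) Pi_ext \<and> S a = Option.bind (P b) Sig_ext) \<and>
        (\<not> is_zero_wo r a \<and> \<not> (\<exists>b. is_succ_of_wo r b a) \<longrightarrow>
            P a = (if \<forall>b. lt_wo r b a \<longrightarrow> P b \<noteq> None
                   then Some (common_ext {the (P b) | b. lt_wo r b a}) else None) \<and>
            S a = (if \<forall>b. lt_wo r b a \<longrightarrow> S b \<noteq> None
                   then Some (common_ext {the (S b) | b. lt_wo r b a}) else None))"
  using hierarchy assms unfolding is_hierarchy_def by (rule bspec)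

lemma stage_zero:
  assumes "is_zero_wo r a"
  shows "P a = Some m \<and> S a = Some m"
proof -
  have "a \<in> Field r"
    using assms unfolding is_zero_wo_def by blast
  from stage_equations[OF this, THEN conjunct1] assms show ?thesis ..
qed

lemma stage_succ:
  assumes "is_succ_of_wo r b a"
  shows "P a = Option.bind (S b) Pi_ext \<and> S a = Option.bind (P b) Sig_ext"
proof -
  have "a \<in> Field r"
    using lt_wo_Field[OF is_succ_of_wo_lt[OF assms]] by blast
  from stage_equations[OF this, THEN conjunct2, THEN conjunct1] assms show ?thesis
    by blast
qed

lemma stage_limit:
  assumes "a \<in> Field r" "\<not> is_zero_wo r a" "\<not> (\<exists>b. is_succ_of_wo r b a)"
  shows "P a = (if \<forall>b. lt_wo r b a \<longrightarrow> P b \<noteq> None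
                then Some (common_ext {the (P b) | b. lt_wo r b a}) else None)"
    and "S a = (if \<forall>b. lt_wo r b a \<longrightarrow> S b \<noteq> None
                then Some (common_ext {the (S b) | b. lt_wo r b a}) else None)"
  using stage_equations[THEN conjunct2, THEN conjunct2, OF assms(1)] assms(2,3) by blast+

definition defined :: "'o \<Rightarrow> bool" where
  "defined c \<longleftrightarrow> P c \<noteq> None \<and> S c \<noteq> None"

definition coherent :: "'o \<Rightarrow> bool" where
  "coherent c \<longleftrightarrow> defined c \<and> is_valuation_map (the (P c)) \<and> is_valuation_map (the (S c)) \<and>
     m \<subseteq>\<^sub>m the (P c) \<and> m \<subseteq>\<^sub>m the (S c) \<and>
     (\<forall>b. lt_wo r b c \<longrightarrow> defined b \<and> (\<forall>x\<in>{the (P b), the (S b)}. \<forall>y\<in>{the (P c), the (S c)}. x \<subseteq>\<^sub>m y))"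

lemma limit_stage_defined:
  assumes "a \<in> Field r" "\<not> is_zero_wo r a" "\<not> (\<exists>b. is_succ_of_wo r b a)"
  shows "defined a \<longleftrightarrow> (\<forall>b. lt_wo r b a \<longrightarrow> defined b)"
  unfolding defined_def stage_limit[OF assms] by (simp add: all_conj_distrib imp_conjR)

lemma coherent_stage_le:
  "coherent c \<Longrightarrow> lt_wo r b c \<Longrightarrow> Q \<in> {P, S} \<Longrightarrow> Q' \<in> {P, S} \<Longrightarrow> the (Q b) \<subseteq>\<^sub>m the (Q' c)"
  unfolding coherent_def by blast

lemma coherent_defined_below: "coherent c \<Longrightarrow> lt_wo r b c \<Longrightarrow> defined b"
  unfolding coherent_def by blast

lemma chain_stages:
  assumes "\<And>b. lt_wo r b c \<Longrightarrow> coherent b" "Q \<in> {P, S}"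
  shows "Complete_Partial_Order.chain (\<subseteq>\<^sub>m) {the (Q b) | b. lt_wo r b c}"
proof (rule chainI)
  fix x y assume "x \<in> {the (Q b) | b. lt_wo r b c}" "y \<in> {the (Q b) | b. lt_wo r b c}"
  then obtain b1 b2 where b: "lt_wo r b1 c" "x = the (Q b1)" "lt_wo r b2 c" "y = the (Q b2)"
    by blast
  then consider "b1 = b2" | "lt_wo r b1 b2" | "lt_wo r b2 b1"
    using lt_wo_trichotomy[OF well_order] lt_wo_Field by metis
  then show "x \<subseteq>\<^sub>m y \<or> y \<subseteq>\<^sub>m x"
    using assms coherent_stage_le b by cases auto
qed

lemma limit_stage:
  assumes "a \<in> Field r" "\<not> is_zero_wo r a" "\<not> (\<exists>b. is_succ_of_wo r b a)" "defined a" "Q \<in> {P, S}"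
  shows "the (Q a) = common_ext {the (Q b) | b. lt_wo r b a}"
  using assms(4,5) stage_limit[OF assms(1-3)] unfolding defined_def by (auto split: if_splits)

lemma succ_stage_defined:
  assumes "is_succ_of_wo r d c" "defined c"
  shows "defined d" "Pi_ext (the (S d)) = Some (the (P c))" "Sig_ext (the (P d)) = Some (the (S c))"
  using assms stage_succ[OF assms(1)] unfolding defined_def
  by (auto split: Option.bind_splits)

text \<open>Pi and Sigma are monotone, so one successor step preserves the inclusion of stages.\<close>

lemma succ_succ_stage_extends:
  assumes e_succ: "is_succ_of_wo r e d" and d_succ: "is_succ_of_wo r d c" and "defined c"
    and coh_d: "coherent d" and coh_e: "coherent e"
  shows "the (P d) \<subseteq>\<^sub>m the (P c) \<and> the (S d) \<subseteq>\<^sub>m the (S c)"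
proof -
  have ed: "lt_wo r e d"
    using is_succ_of_wo_lt[OF e_succ] .
  note next_stage = succ_stage_defined[OF d_succ \<open>defined c\<close>]
  have val_e: "is_valuation_map (the (P e))" "is_valuation_map (the (S e))"
    using coh_e unfolding coherent_def by blast+
  have le_e: "the (S e) \<subseteq>\<^sub>m the (S d)" "the (P e) \<subseteq>\<^sub>m the (P d)"
    using coherent_stage_le[OF coh_d ed] by blast+
  obtain pe se where e_stages: "P e = Some pe" "S e = Some se"
    using coherent_defined_below[OF coh_d ed] unfolding defined_def by blast
  obtain p where p: "Pi_ext se = Some p" "p \<subseteq>\<^sub>m the (P c)"
    using Pi_ext_mono[OF sigma_distributive R_complete val_e(2) le_e(1) next_stage(2)] e_stages by auto
  obtain s where s: "Sig_ext pe = Some s" "s \<subseteq>\<^sub>m the (S c)"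
    using Sig_ext_mono[OF sigma_distributive R_complete val_e(1) le_e(2) next_stage(3)] e_stages by auto
  have "P d = Some p" "S d = Some s"
    using stage_succ[OF e_succ] e_stages p(1) s(1) by simp_all
  with p(2) s(2) show ?thesis
    by simp
qed

lemma succ_stage_extends:
  assumes d_succ: "is_succ_of_wo r d c" and "defined c"
    and IH: "\<And>b. lt_wo r b c \<Longrightarrow> defined b \<Longrightarrow> coherent b"
  shows "the (P d) \<subseteq>\<^sub>m the (P c) \<and> the (S d) \<subseteq>\<^sub>m the (S c)"
proof -
  have dc: "lt_wo r d c"
    using is_succ_of_wo_lt[OF d_succ] .
  note next_stage = succ_stage_defined[OF d_succ \<open>defined c\<close>]
  have Pi_c: "is_Pi_ext (the (S d)) (the (P c))" and Sig_c: "is_Sig_ext (the (P d)) (the (S c))"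
    using next_stage(2,3) by (simp_all add: Pi_ext_eq_Some_iff Sig_ext_eq_Some_iff)
  have coh_d: "coherent d"
    using IH[OF dc next_stage(1)] .
  have "d \<in> Field r"
    using lt_wo_Field[OF dc] by blast
  consider (zero) "is_zero_wo r d" | (succ) e where "is_succ_of_wo r e d"
    | (limit) "\<not> is_zero_wo r d" "\<not> (\<exists>e. is_succ_of_wo r e d)"
    by blast
  then show ?thesis
  proof cases
    case zero
    then have "the (P d) = m" "the (S d) = m"
      using stage_zero by simp_all
    then show ?thesis
      using is_Pi_ext_extends[OF Pi_c] is_Sig_ext_extends[OF Sig_c] by simp
  next
    case (succ e)
    have ed: "lt_wo r e d"
      using is_succ_of_wo_lt[OF succ] .
    have "coherent e"
      using IH[OF lt_wo_trans[OF well_order ed dc] coherent_defined_below[OF coh_d ed]] .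
    then show ?thesis
      using succ_succ_stage_extends[OF succ d_succ \<open>defined c\<close> coh_d] by blast
  next
    case limit
    have "the (P e) \<subseteq>\<^sub>m the (P c) \<and> the (S e) \<subseteq>\<^sub>m the (S c)" if "lt_wo r e d" for e
    proof -
      have "the (P e) \<subseteq>\<^sub>m the (S d)" "the (S e) \<subseteq>\<^sub>m the (P d)"
        using coherent_stage_le[OF coh_d that, of P S] coherent_stage_le[OF coh_d that, of S P] by simp_all
      then show ?thesis
        using is_Pi_ext_extends[OF Pi_c] is_Sig_ext_extends[OF Sig_c] map_le_trans by blast
    qed
    then have "common_ext {the (P e) | e. lt_wo r e d} \<subseteq>\<^sub>m the (P c)"
      "common_ext {the (S e) | e. lt_wo r e d} \<subseteq>\<^sub>m the (S c)"
      by (intro common_ext_least; blast)+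
    then show ?thesis
      using limit_stage[OF \<open>d \<in> Field r\<close> limit next_stage(1), of P]
        limit_stage[OF \<open>d \<in> Field r\<close> limit next_stage(1), of S] by simp
  qed
qed

lemma coherent_succ:
  assumes succ: "is_succ_of_wo r d c" and "defined c"
    and IH: "\<And>b. lt_wo r b c \<Longrightarrow> defined b \<Longrightarrow> coherent b"
  shows "coherent c"
proof -
  have dc: "lt_wo r d c"
    using is_succ_of_wo_lt[OF succ] .
  note next_stage = succ_stage_defined[OF succ \<open>defined c\<close>]
  have Pi_c: "is_Pi_ext (the (S d)) (the (P c))" and Sig_c: "is_Sig_ext (the (P d)) (the (S c))"
    using next_stage(2,3) by (simp_all add: Pi_ext_eq_Some_iff Sig_ext_eq_Some_iff)
  have coh_d: "coherent d"
    using IH[OF dc next_stage(1)] .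
  have d_le: "\<forall>x\<in>{the (P d), the (S d)}. \<forall>y\<in>{the (P c), the (S c)}. x \<subseteq>\<^sub>m y"
    using succ_stage_extends[OF succ \<open>defined c\<close> IH] is_Pi_ext_extends[OF Pi_c] is_Sig_ext_extends[OF Sig_c]
    by blast
  have below_d: "\<forall>x\<in>{the (P b), the (S b)}. \<forall>y\<in>{the (P d), the (S d)}. x \<subseteq>\<^sub>m y"
    if "lt_wo r b d" for b
    using coh_d that unfolding coherent_def by blast
  have "\<forall>x\<in>{the (P b), the (S b)}. \<forall>y\<in>{the (P c), the (S c)}. x \<subseteq>\<^sub>m y" if "lt_wo r b c" for b
  proof (cases "b = d")
    case True
    then show ?thesis
      using d_le by simp
  next
    case False
    then have "\<forall>x\<in>{the (P b), the (S b)}. x \<subseteq>\<^sub>m the (P d)"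
      using below_d lt_succ_wo_cases[OF well_order succ that] by blast
    then show ?thesis
      using d_le map_le_trans by blast
  qed
  moreover have "defined b" if "lt_wo r b c" for b
    using lt_succ_wo_cases[OF well_order succ that] coherent_defined_below[OF coh_d] next_stage(1) by blast
  moreover have "m \<subseteq>\<^sub>m the (P c)" "m \<subseteq>\<^sub>m the (S c)"
    using coh_d d_le map_le_trans unfolding coherent_def by blast+
  moreover have "is_valuation_map (the (P c))" "is_valuation_map (the (S c))"
    using Pi_c Sig_c unfolding is_Pi_ext_def is_Sig_ext_def by blast+
  ultimately show ?thesis
    using \<open>defined c\<close> unfolding coherent_def by blast
qed

lemma coherent_limit:
  assumes c: "c \<in> Field r" "\<not> is_zero_wo r c" "\<not> (\<exists>b. is_succ_of_wo r b c)" and "defined c"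
    and IH: "\<And>b. lt_wo r b c \<Longrightarrow> defined b \<Longrightarrow> coherent b"
  shows "coherent c"
proof -
  have defined_below: "defined b" if "lt_wo r b c" for b
    using limit_stage_defined[OF c] \<open>defined c\<close> that by blast
  have coh: "coherent b" if "lt_wo r b c" for b
    using IH[OF that defined_below[OF that]] .
  have upper: "the (Q b) \<subseteq>\<^sub>m the (Q c)" if "lt_wo r b c" "Q \<in> {P, S}" for b Q
  proof -
    have "the (Q b) \<in> {the (Q b) | b. lt_wo r b c}"
      using that(1) by blast
    from common_ext_upper[OF chain_stages[OF coh that(2)] this] show ?thesis
      using limit_stage[OF c \<open>defined c\<close> that(2)] by simp
  qed
  have "\<forall>x\<in>{the (P b), the (S b)}. \<forall>y\<in>{the (P c), the (S c)}. x \<subseteq>\<^sub>m y" if bc: "lt_wo r b c" for b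
  proof -
    obtain b' where b': "lt_wo r b b'" "lt_wo r b' c"
      using c(3) bc unfolding is_succ_of_wo_def by auto
    have "the (Q b) \<subseteq>\<^sub>m the (Q' c)" if "Q \<in> {P, S}" "Q' \<in> {P, S}" for Q Q'
      using map_le_trans[OF coherent_stage_le[OF coh[OF b'(2)] b'(1) that] upper[OF b'(2) that(2)]] .
    then show ?thesis
      by blast
  qed
  moreover obtain b0 where "lt_wo r b0 c"
    using lt_wo_nonzero_exists[OF well_order c(1,2)] .
  then have "m \<subseteq>\<^sub>m the (P c)" "m \<subseteq>\<^sub>m the (S c)"
    using coh upper map_le_trans unfolding coherent_def by blast+
  moreover have "is_valuation_map (the (Q c))" if "Q \<in> {P, S}" for Q
  proof -
    have "\<forall>q\<in>{the (Q b) | b. lt_wo r b c}. is_valuation_map q"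
      using coh that unfolding coherent_def by blast
    then show ?thesis
      using valuation_map_common_ext[OF chain_stages[OF coh that]]
        limit_stage[OF c \<open>defined c\<close> that] by simp
  qed
  ultimately show ?thesis
    using \<open>defined c\<close> defined_below unfolding coherent_def by blast
qed

lemma coherent_if_defined: "c \<in> Field r \<Longrightarrow> defined c \<Longrightarrow> coherent c"
  using well_order
proof (induction c rule: lt_wo_induct)
  case (less c)
  have IH: "coherent b" if "lt_wo r b c" "defined b" for b
    using less.IH[OF that(1)] lt_wo_Field[OF that(1)] that(2) by blast
  consider (zero) "is_zero_wo r c" | (succ) d where "is_succ_of_wo r d c"
    | (limit) "\<not> is_zero_wo r c" "\<not> (\<exists>d. is_succ_of_wo r d c)"
    by blast
  then show ?case
  proof cases
    case zero
    then show ?thesis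
      using stage_zero[OF zero] not_lt_wo_zero[OF well_order zero] valuation_map
      unfolding coherent_def defined_def by simp
  next
    case (succ d)
    then show ?thesis
      using coherent_succ less.prems(2) IH by blast
  next
    case limit
    then show ?thesis
      using coherent_limit less.prems IH by blast
  qed
qed

end

section \<open>Collapse of the hierarchy\<close>

definition closed_extension :: "('v::lattice \<rightharpoonup> 'e::ordered_ab_group_add) \<Rightarrow> ('v \<rightharpoonup> 'e) \<Rightarrow> bool" where
  "closed_extension m F \<longleftrightarrow> Pi_ext F = Some F \<and> Sig_ext F = Some F \<and> m \<subseteq>\<^sub>m F"

context valuation_hierarchy
begin

lemma stages_below_closed:
  assumes F: "closed_extension m F"
  shows "c \<in> Field r \<Longrightarrow> defined c \<and> the (P c) \<subseteq>\<^sub>m F \<and> the (S c) \<subseteq>\<^sub>m F"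
  using well_order
proof (induction c rule: lt_wo_induct)
  case (less c)
  have IH: "defined b \<and> the (P b) \<subseteq>\<^sub>m F \<and> the (S b) \<subseteq>\<^sub>m F" if "lt_wo r b c" for b
    using less.IH[OF that] lt_wo_Field[OF that] by blast
  consider (zero) "is_zero_wo r c" | (succ) d where "is_succ_of_wo r d c"
    | (limit) "\<not> is_zero_wo r c" "\<not> (\<exists>d. is_succ_of_wo r d c)"
    by blast
  then show ?case
  proof cases
    case zero
    then show ?thesis
      using stage_zero F unfolding defined_def closed_extension_def by simp
  next
    case (succ d)
    have dc: "lt_wo r d c"
      using is_succ_of_wo_lt[OF succ] .
    obtain pd sd where d: "P d = Some pd" "S d = Some sd" "pd \<subseteq>\<^sub>m F" "sd \<subseteq>\<^sub>m F"
      using IH[OF dc] unfolding defined_def by auto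
    have "coherent d"
      using coherent_if_defined lt_wo_Field[OF dc] IH[OF dc] by blast
    then have "is_valuation_map pd" "is_valuation_map sd"
      using d unfolding coherent_def by auto
    moreover have "Pi_ext F = Some F" "Sig_ext F = Some F"
      using F unfolding closed_extension_def by blast+
    ultimately obtain p s where "Pi_ext sd = Some p" "p \<subseteq>\<^sub>m F" "Sig_ext pd = Some s" "s \<subseteq>\<^sub>m F"
      using Pi_ext_mono[OF sigma_distributive R_complete _ d(4)] Sig_ext_mono[OF sigma_distributive R_complete _ d(3)]
      by metis
    then show ?thesis
      using stage_succ[OF succ] d(1,2) unfolding defined_def by simp
  next
    case limit
    have "defined c"
      using limit_stage_defined[OF less.prems limit] IH by blast
    moreover have "the (Q c) \<subseteq>\<^sub>m F" if "Q \<in> {P, S}" for Q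
      using common_ext_least[of "{the (Q b) | b. lt_wo r b c}" F] IH that
        limit_stage[OF less.prems limit \<open>defined c\<close> that] by auto
    ultimately show ?thesis
      by blast
  qed
qed

lemma stage_extends:
  "a \<in> Field r \<Longrightarrow> defined a \<Longrightarrow> Q \<in> {the (P a), the (S a)} \<Longrightarrow> m \<subseteq>\<^sub>m Q"
  using coherent_if_defined unfolding coherent_def by auto

definition succ_of :: "'o \<Rightarrow> 'o" where
  "succ_of c = (SOME d. is_succ_of_wo r c d)"

definition stage_dom :: "'o \<Rightarrow> 'v set" where
  "stage_dom c = dom (the (P c)) \<union> dom (the (S c))"

text \<open>An element that is new one or two successor steps after c, tagged with which of the two.\<close>

definition growth_witness :: "'o \<Rightarrow> 'v \<times> bool" where
  "growth_witness c =
     (if stage_dom c \<noteq> stage_dom (succ_of c)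
      then (SOME x. x \<in> stage_dom (succ_of c) - stage_dom c, True)
      else (SOME x. x \<in> stage_dom (succ_of (succ_of c)) - stage_dom (succ_of c), False))"

lemma stage_extensions_exist:
  assumes "closed_extension m T" "c \<in> Field r"
  shows "Pi_ext (the (S c)) \<noteq> None" "Sig_ext (the (P c)) \<noteq> None"
proof -
  have "coherent c"
    using coherent_if_defined stages_below_closed assms by blast
  then have "is_valuation_map (the (P c))" "is_valuation_map (the (S c))"
    unfolding coherent_def by blast+
  moreover have "the (P c) \<subseteq>\<^sub>m T" "the (S c) \<subseteq>\<^sub>m T"
    using stages_below_closed assms by blast+
  ultimately show "Pi_ext (the (S c)) \<noteq> None" "Sig_ext (the (P c)) \<noteq> None"
    using assms(1) Pi_ext_mono[OF sigma_distributive R_complete] Sig_ext_mono[OF sigma_distributive R_complete]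
    unfolding closed_extension_def by (metis option.distinct(1))+
qed

context
  fixes T
  assumes closed_T: "closed_extension m T"
    and successors: "\<forall>c\<in>Field r. \<exists>d. is_succ_of_wo r c d"
begin

lemma is_succ_of_wo_succ_of: "c \<in> Field r \<Longrightarrow> is_succ_of_wo r c (succ_of c)"
  unfolding succ_of_def using successors someI_ex by metis

lemma succ_of_Field: "c \<in> Field r \<Longrightarrow> succ_of c \<in> Field r"
  using lt_wo_Field[OF is_succ_of_wo_lt[OF is_succ_of_wo_succ_of]] by blast

lemma stage_dom_below:
  assumes "lt_wo r b c" "Q \<in> {P, S}"
  shows "stage_dom b \<subseteq> dom (the (Q c))"
proof -
  have "coherent c"
    using coherent_if_defined stages_below_closed[OF closed_T] lt_wo_Field[OF assms(1)] by blast
  then have "the (P b) \<subseteq>\<^sub>m the (Q c)" "the (S b) \<subseteq>\<^sub>m the (Q c)"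
    using coherent_stage_le[OF _ assms(1) _ assms(2)] by simp_all
  then show ?thesis
    unfolding stage_dom_def using map_le_implies_dom_le by blast
qed

lemma stage_dom_mono: "lt_wo r b c \<Longrightarrow> stage_dom b \<subseteq> stage_dom c"
  using stage_dom_below[of b c P] unfolding stage_dom_def by blast

text \<open>The four maps at the middle step coincide: they lie below T and have the same domain.\<close>

lemma stage_dom_plateau_closed:
  assumes "c \<in> Field r" and plateau: "stage_dom c = stage_dom (succ_of c)"
    "stage_dom (succ_of c) = stage_dom (succ_of (succ_of c))"
  defines "c1 \<equiv> succ_of c"
  shows "Pi_ext (the (P c1)) = Some (the (P c1)) \<and> Sig_ext (the (P c1)) = Some (the (P c1))"
proof -
  define c2 where "c2 = succ_of c1"
  have c1: "is_succ_of_wo r c c1" "c1 \<in> Field r"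
    unfolding c1_def using is_succ_of_wo_succ_of succ_of_Field assms(1) by blast+
  have c2: "is_succ_of_wo r c1 c2" "c2 \<in> Field r"
    unfolding c2_def using is_succ_of_wo_succ_of succ_of_Field c1(2) by blast+
  have dom_stage: "dom (the (Q d)) \<subseteq> stage_dom d" if "Q \<in> {P, S}" for Q d
    using that unfolding stage_dom_def by blast
  have "dom (the (Q c1)) = stage_dom c1" if "Q \<in> {P, S}" for Q
    using stage_dom_below[OF is_succ_of_wo_lt[OF c1(1)] that] dom_stage[OF that] plateau(1)
    unfolding c1_def by blast
  moreover have "dom (the (Q c2)) = stage_dom c1" if "Q \<in> {P, S}" for Q
    using stage_dom_below[OF is_succ_of_wo_lt[OF c2(1)] that] dom_stage[OF that] plateau(2)
    unfolding c1_def c2_def by blast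
  moreover have "the (Q d) \<subseteq>\<^sub>m T" if "Q \<in> {P, S}" "d \<in> {c1, c2}" for Q d
    using stages_below_closed[OF closed_T] c1(2) c2(2) that by blast
  ultimately have "the (S c1) = the (P c1)" "the (P c2) = the (P c1)" "the (S c2) = the (P c1)"
    using map_le_same_dom_eq by (metis insertCI)+
  then show ?thesis
    using succ_stage_defined[OF c2(1)] stages_below_closed[OF closed_T c2(2)] by auto
qed


lemma growth_witness_spec:
  assumes c: "c \<in> Field r"
    and grows: "stage_dom c \<noteq> stage_dom (succ_of c) \<or> stage_dom (succ_of c) \<noteq> stage_dom (succ_of (succ_of c))"
  defines "w \<equiv> growth_witness c"
  shows "fst w \<notin> stage_dom c" "fst w \<in> stage_dom (succ_of (succ_of c))"
    "snd w \<Longrightarrow> fst w \<in> stage_dom (succ_of c)"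
    "\<not> snd w \<Longrightarrow> stage_dom (succ_of c) \<noteq> stage_dom (succ_of (succ_of c))"
proof -
  let ?U = stage_dom and ?s = succ_of
  have sub: "?U c \<subseteq> ?U (?s c)" "?U (?s c) \<subseteq> ?U (?s (?s c))"
    using stage_dom_mono[OF is_succ_of_wo_lt[OF is_succ_of_wo_succ_of[OF c]]]
      stage_dom_mono[OF is_succ_of_wo_lt[OF is_succ_of_wo_succ_of[OF succ_of_Field[OF c]]]] .
  have "fst w \<notin> ?U c \<and> fst w \<in> ?U (?s (?s c)) \<and> (snd w \<longrightarrow> fst w \<in> ?U (?s c)) \<and>
      (\<not> snd w \<longrightarrow> ?U (?s c) \<noteq> ?U (?s (?s c)))"
  proof (cases "?U c \<noteq> ?U (?s c)")
    case True
    then have ex: "\<exists>x. x \<in> ?U (?s c) - ?U c"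
      using sub by blast
    show ?thesis
      using someI_ex[OF ex] sub True unfolding w_def growth_witness_def by auto
  next
    case False
    then have ex: "\<exists>x. x \<in> ?U (?s (?s c)) - ?U (?s c)"
      using sub grows by blast
    show ?thesis
      using someI_ex[OF ex] False grows unfolding w_def growth_witness_def by auto
  qed
  then show "fst w \<notin> ?U c" "fst w \<in> ?U (?s (?s c))" "snd w \<Longrightarrow> fst w \<in> ?U (?s c)"
    "\<not> snd w \<Longrightarrow> ?U (?s c) \<noteq> ?U (?s (?s c))"
    by blast+
qed

lemma growth_witness_inj_on:
  assumes grows: "\<forall>c\<in>Field r. stage_dom c \<noteq> stage_dom (succ_of c) \<or>
    stage_dom (succ_of c) \<noteq> stage_dom (succ_of (succ_of c))"
  shows "inj_on growth_witness (Field r)"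
proof -
  let ?w = growth_witness and ?U = stage_dom and ?s = succ_of
  have "?w c \<noteq> ?w d" if cd: "lt_wo r c d" for c d
  proof -
    have c: "c \<in> Field r" and d: "d \<in> Field r"
      using lt_wo_Field[OF cd] by blast+
    note wc = growth_witness_spec[OF c grows[rule_format, OF c]]
      and wd = growth_witness_spec[OF d grows[rule_format, OF d]]
    consider "?s c = d" | "?s (?s c) = d" | "lt_wo r (?s (?s c)) d"
      using succ_wo_le[OF well_order is_succ_of_wo_succ_of[OF c] cd]
        succ_wo_le[OF well_order is_succ_of_wo_succ_of[OF succ_of_Field[OF c]]] by blast
    then show ?thesis
    proof cases
      case 1
      show ?thesis
      proof (cases "snd (?w c)")
        case True
        then show ?thesis
          using wc(3) wd(1) 1 by auto
      next
        case False
        then have "?U d \<noteq> ?U (?s d)"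
          using wc(4) 1 by simp
        then have "snd (?w d)"
          unfolding growth_witness_def by simp
        with False show ?thesis
          by auto
      qed
    next
      case 2
      then show ?thesis
        using wc(2) wd(1) by auto
    next
      case 3
      then show ?thesis
        using wc(2) wd(1) stage_dom_mono[OF 3] by auto
    qed
  qed
  then show ?thesis
    using lt_wo_trichotomy[OF well_order] by (metis inj_onI)
qed

lemma injection_if_no_closed_stage:
  assumes "\<forall>c\<in>Field r. \<not> (Pi_ext (the (P c)) = Some (the (P c)) \<and> Sig_ext (the (P c)) = Some (the (P c)))"
  obtains f :: "'o \<Rightarrow> 'v \<times> bool" where "inj_on f (Field r)"
proof -
  have "\<forall>c\<in>Field r. stage_dom c \<noteq> stage_dom (succ_of c) \<or>
      stage_dom (succ_of c) \<noteq> stage_dom (succ_of (succ_of c))"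
    using stage_dom_plateau_closed assms succ_of_Field by blast
  then show thesis
    using growth_witness_inj_on that by blast
qed

end

end

lemma collapses_at_least_closed:
  fixes m :: "'v::lattice \<rightharpoonup> 'e::ordered_ab_group_add"
  assumes "sigma_distributive TYPE('v)" "R_complete TYPE('e)" "is_valuation_map m"
    and "collapses_at m Q"
  shows "closed_extension m Q" and "closed_extension m F \<Longrightarrow> Q \<subseteq>\<^sub>m F"
proof -
  obtain r :: "'v set rel" and P S a where hier: "Well_order r" "is_hierarchy m r P S"
    and a: "a \<in> Field r" "P a \<noteq> None" "S a \<noteq> None" "Q \<in> {the (P a), the (S a)}"
    and closed: "Pi_ext Q = Some Q" "Sig_ext Q = Some Q"
    using assms(4) unfolding collapses_at_def by auto
  interpret valuation_hierarchy m r P S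
    using assms(1-3) hier by unfold_locales
  have "defined a"
    using a(2,3) unfolding defined_def by blast
  then show "closed_extension m Q"
    using stage_extends[OF a(1) _ a(4)] closed unfolding closed_extension_def by blast
  show "Q \<subseteq>\<^sub>m F" if "closed_extension m F"
    using stages_below_closed[OF that a(1)] a(4) by blast
qed

lemma collapses_at_unique:
  fixes m :: "'v::lattice \<rightharpoonup> 'e::ordered_ab_group_add"
  assumes "sigma_distributive TYPE('v)" "R_complete TYPE('e)" "is_valuation_map m"
    and "collapses_at m Q" "collapses_at m Q'"
  shows "Q = Q'"
  using collapses_at_least_closed[OF assms(1-3)] assms(4,5) map_le_antisym by metis

lemma collapses_at_closed_stage:
  fixes m :: "'v::lattice \<rightharpoonup> 'e::ordered_ab_group_add" and r :: "'v set rel"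
  assumes "valuation_hierarchy m r P S" "closed_extension m T" "c \<in> Field r"
    and "Pi_ext (the (P c)) = Some (the (P c))" "Sig_ext (the (P c)) = Some (the (P c))"
  shows "collapses_at m (the (P c))"
proof -
  interpret valuation_hierarchy m r P S
    by (fact assms(1))
  have "defined c" "Pi_ext (the (S c)) \<noteq> None"
    using stages_below_closed[OF assms(2,3)] stage_extensions_exist[OF assms(2,3)] by blast+
  then show ?thesis
    unfolding collapses_at_def defined_def using well_order hierarchy assms(3-5)
    by (intro exI[of _ r] exI[of _ P] exI[of _ S] exI[of _ c]) simp
qed

text \<open>The hierarchy is indexed by the cardinal of the power set of V, through which the stages
  cannot grow forever.\<close>

lemma collapses_at_exists:
  fixes m :: "'v::lattice \<rightharpoonup> 'e::ordered_ab_group_add"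
  assumes "sigma_distributive TYPE('v)" "R_complete TYPE('e)" "is_valuation_map m"
    and T: "closed_extension m T"
  obtains Q where "collapses_at m Q"
proof -
  let ?r = "card_of (UNIV :: 'v set set)"
  obtain P S where "is_hierarchy m ?r P S"
    using hierarchy_exists[OF card_of_Well_order] .
  then have hier: "valuation_hierarchy m ?r P S"
    using assms(1-3) card_of_Well_order by unfold_locales
  show thesis
  proof (cases "\<exists>c\<in>Field ?r. Pi_ext (the (P c)) = Some (the (P c)) \<and> Sig_ext (the (P c)) = Some (the (P c))")
    case True
    then show thesis
      using collapses_at_closed_stage[OF hier T] that by blast
  next
    case no_closed_stage: False
    show thesis
    proof (cases "finite (UNIV :: 'v set)")
      case True
      have "{} \<in> Field ?r"
        by (simp add: Field_card_of)
      then obtain z where "is_zero_wo ?r z"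
        by (rule is_zero_wo_exists[OF card_of_Well_order])
      then have "the (P z) = m"
        using valuation_hierarchy.stage_zero[OF hier] by simp
      moreover have "z \<in> Field ?r"
        by (simp add: Field_card_of)
      ultimately have False
        using no_closed_stage Pi_ext_finite[OF True assms(3)] Sig_ext_finite[OF True assms(3)] by auto
      then show thesis ..
    next
      case False
      have "\<forall>c\<in>Field ?r. \<exists>d. is_succ_of_wo ?r c d"
        using card_of_Pow_UNIV_successor[OF False] by metis
      then obtain f :: "'v set \<Rightarrow> 'v \<times> bool" where "inj_on f (Field ?r)"
        using valuation_hierarchy.injection_if_no_closed_stage[OF hier T] no_closed_stage by blast
      then have "inj f"
        by (simp add: Field_card_of)
      then show thesis
        using no_inj_Pow_times_bool[OF \<open>infinite (UNIV :: 'v set)\<close>] by blast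
    qed
  qed
qed

lemma closure_val_eq:
  fixes \<phi> :: "'v::lattice \<Rightarrow> 'e::ordered_ab_group_add"
  assumes "sigma_distributive TYPE('v)" "R_complete TYPE('e)" "valuation L \<phi>"
    and "collapses_at (to_map L \<phi>) Q"
  shows "closure_val L \<phi> = Q"
  unfolding closure_val_def
proof (rule the_equality)
  show "collapses_at (to_map L \<phi>) Q"
    by (fact assms(4))
  show "Q' = Q" if "collapses_at (to_map L \<phi>) Q'" for Q'
    using collapses_at_unique[OF assms(1,2) valuation_map_to_map[OF assms(3)] that assms(4)] .
qed

theorem proposition5p35:
  fixes L C :: "'v::lattice set"
    and \<phi> \<psi> :: "'v \<Rightarrow> 'e::ordered_ab_group_add"
  assumes "valuation_system L \<phi>"
    and "valuation_system C \<psi>"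
    and "extends C \<psi> L \<phi>"
    and "extendible C \<psi>"
  shows "extendible L \<phi> \<and> closure_val L \<phi> \<subseteq>\<^sub>m closure_val C \<psi>"
proof -
  have sd: "sigma_distributive TYPE('v)" and rc: "R_complete TYPE('e)"
    and val_L: "valuation L \<phi>" and val_C: "valuation C \<psi>"
    using assms(1,2) unfolding valuation_system_def by blast+
  obtain Q\<psi> where Q\<psi>: "collapses_at (to_map C \<psi>) Q\<psi>"
    using assms(4) unfolding extendible_def by blast
  have "closed_extension (to_map L \<phi>) Q\<psi>"
    using collapses_at_least_closed(1)[OF sd rc valuation_map_to_map[OF val_C] Q\<psi>]
      to_map_le[OF assms(3)] map_le_trans unfolding closed_extension_def by blast
  then obtain Q\<phi> where Q\<phi>: "collapses_at (to_map L \<phi>) Q\<phi>"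
    using collapses_at_exists[OF sd rc valuation_map_to_map[OF val_L]] by blast
  have "Q\<phi> \<subseteq>\<^sub>m Q\<psi>"
    using collapses_at_least_closed(2)[OF sd rc valuation_map_to_map[OF val_L] Q\<phi>] \<open>closed_extension _ Q\<psi>\<close> .
  then show ?thesis
    using Q\<phi> closure_val_eq[OF sd rc val_L Q\<phi>] closure_val_eq[OF sd rc val_C Q\<psi>]
    unfolding extendible_def by auto
qed

end
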